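(* Let $\mathbb F_q$ be a finite field with $q$ elements, let $n\ge 2$, let $a_1,\dots,a_n,b\in\mathbb F_q^*$, and let $m_1,\dots,m_n,k,k_1,\dots,k_n$ be positive integers. Put $M=\operatorname{lcm}[m_1,\dots,m_n]$ and $d_j=\gcd(m_j,q-1)$ for $j=1,\dots,n$. Let $0\le t\le n$ and assume (after indexing) that $d_1,\dots,d_t$ are odd, $d_{t+1},\dots,d_n$ are even, and $d_1,\dots,d_t,d_{t+1}/2,\dots,d_n/2$ are pairwise coprime. Assume also that $$\gcd\Bigl(\sum_{j=1}^n \frac{k_jM}{m_j}-kM,\;q-1\Bigr)=1.$$ Then the number of $(x_1,\dots,x_n)\in\mathbb F_q^n$ satisfying $(a_1x_1^{m_1}+\dots+a_nx_n^{m_n})^k=bx_1^{k_1}\cdots x_n^{k_n}$ equals $$q^{n-1}+(-1)^{n-1}+(-1)^{n-1}\sum_{j=1}^{\lfloor (n-t)/2\rfloor}\eta((-1)^j)\,\sigma_{2j}\bigl(\eta(a_{t+1}),\dots,\eta(a_n)\bigr)\,q^j+E,$$ where $E=\eta((-1)^{n/2}a_1\cdots a_n)\,q^{(n-2)/2}(q-1)$ if $t=0$ and $n$ is even, and $E=0$ otherwise.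
   Context: $\sigma_{2j}(z_1,\dots,z_{n-t})$ denotes the elementary symmetric polynomial of degree $2j$ in $n-t$ variables. $\eta$ is the quadratic character on $\mathbb F_q$: $\eta(x)=+1,-1,0$ according as $x$ is a nonzero square, a non-square, or zero in $\mathbb F_q$. (If $q$ is even then every $d_j$ is odd, so $t=n$ and all terms involving $\eta$ are absent.) $\mathbb F_q^*=\mathbb F_q\setminus\{0\}$. *)

theory Defs
  imports Main "HOL-Library.FuncSet"
begin

definition quad_char :: "'a::field \<Rightarrow> int" where
  "quad_char x = (if x = 0 then 0 else if (\<exists>y. y ^ 2 = x) then 1 else -1)"

definition esym :: "nat set \<Rightarrow> (nat \<Rightarrow> int) \<Rightarrow> nat \<Rightarrow> int" where
  "esym S f r = (\<Sum>T \<in> {T. T \<subseteq> S \<and> card T = r}. \<Prod>i\<in>T. f i)"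

end

theory Submission
  imports Defs "HOL-Library.Cardinality" "HOL-Number_Theory.Number_Theory" "HOL-Algebra.Multiplicative_Group"
begin

text \<open>
  A solution with a vanishing coordinate is just a zero of the form
  \<open>a\<^sub>1 x\<^sub>1 ^ m\<^sub>1 + \<dots> + a\<^sub>n x\<^sub>n ^ m\<^sub>n\<close> with a vanishing coordinate.
  On the points with nonzero coordinates and nonzero form value the group \<open>\<bbbF>\<^sub>q\<^sup>*\<close> acts by
  \<open>x\<^sub>j \<mapsto> \<lambda> ^ (M div m\<^sub>j) * x\<^sub>j\<close>, multiplying the left-hand side by \<open>\<lambda> ^ (k M)\<close> and the
  right-hand side by \<open>\<lambda> ^ (\<Sum> k\<^sub>j M div m\<^sub>j)\<close>; by the gcd hypothesis every orbit contains exactly one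
  solution. So everything reduces to the numbers of zeros of the diagonal form in \<open>\<bbbF>\<^sub>q\<^sup>n\<close> and in
  \<open>(\<bbbF>\<^sub>q\<^sup>*)\<^sup>n\<close>.

  These are sums over \<open>c\<^sub>1 + \<dots> + c\<^sub>n = 0\<close> of products of the fibre sizes
  \<open>#{x. a\<^sub>j x ^ m\<^sub>j = c\<^sub>j}\<close>, which depend on discrete logarithms modulo \<open>d\<^sub>j\<close>. Averaging over the
  scalings \<open>c \<mapsto> g ^ s c\<close> and applying the Chinese remainder theorem to the pairwise coprime moduli
  \<open>d\<^sub>1, \<dots>, d\<^sub>t, d\<^sub>t\<^sub>+\<^sub>1/2, \<dots>, d\<^sub>n/2\<close> turns such a product into a sum over even subsets
  \<open>V \<subseteq> {t+1..n}\<close> of \<open>\<Prod>\<^sub>j\<^sub>\<in>\<^sub>V \<eta>(a\<^sub>j c\<^sub>j)\<close>: only the quadratic character survives. The remaining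
  convolutions of \<open>\<eta>\<close> and the trivial character are Jacobi sums, evaluated in closed form by
  induction on the number of variables.
\<close>

section \<open>Counting solutions of congruences\<close>

lemma card_cong_lessThan:
  fixes P N x :: nat
  assumes "0 < P" "P dvd N"
  shows "card {s\<in>{..<N}. [s = x] (mod P)} = N div P"
proof -
  obtain K where N: "N = P * K" using assms by (auto elim: dvdE)
  have "{s\<in>{..<N}. [s = x] (mod P)} = (\<lambda>k. x mod P + P * k) ` {..<K}"
  proof (intro equalityI subsetI)
    fix s assume "s \<in> {s\<in>{..<N}. [s = x] (mod P)}"
    then have "s mod P = x mod P" "s < P * K" by (auto simp: cong_def N)
    moreover have "s div P < K" using \<open>s < P * K\<close> assms(1)
      by (simp add: div_less_iff_less_mult mult.commute)
    ultimately show "s \<in> (\<lambda>k. x mod P + P * k) ` {..<K}"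
      by (intro image_eqI[of _ _ "s div P"]) (auto, metis mod_div_mult_eq mult.commute)
  next
    fix s assume "s \<in> (\<lambda>k. x mod P + P * k) ` {..<K}"
    then obtain k where k: "k < K" "s = x mod P + P * k" by auto
    have "x mod P + P * k < P * (k + 1)" using assms(1) by simp
    also have "\<dots> \<le> P * K" using k by (intro mult_le_mono2) simp
    finally show "s \<in> {s\<in>{..<N}. [s = x] (mod P)}" using k N by (simp add: cong_def)
  qed
  also have "card \<dots> = K"
    using assms(1) by (subst card_image) (auto simp: inj_on_def)
  finally show ?thesis using N assms by simp
qed

lemma prod_dvd_if_pairwise_coprime:
  fixes m :: "'b \<Rightarrow> nat"
  assumes "\<forall>i\<in>S. \<forall>j\<in>S. i \<noteq> j \<longrightarrow> coprime (m i) (m j)" "\<forall>j\<in>S. m j dvd N"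
  shows "(\<Prod>j\<in>S. m j) dvd N"
  using coprime_cong_prod_nat[of S m N 0] assms by (simp add: cong_0_iff)

lemma card_cong_system_lessThan:
  fixes m u :: "'b \<Rightarrow> nat"
  assumes fin: "finite S" and pos: "\<forall>j\<in>S. 0 < m j"
    and cop: "\<forall>i\<in>S. \<forall>j\<in>S. i \<noteq> j \<longrightarrow> coprime (m i) (m j)"
    and dvd: "\<forall>j\<in>S. m j dvd N"
  shows "card {s\<in>{..<N}. \<forall>j\<in>S. [s = u j] (mod m j)} = N div (\<Prod>j\<in>S. m j)"
proof -
  obtain x where x: "\<forall>j\<in>S. [x = u j] (mod m j)"
    using chinese_remainder_nat[OF fin cop] by blast
  have "(\<forall>j\<in>S. [s = u j] (mod m j)) \<longleftrightarrow> [s = x] (mod (\<Prod>j\<in>S. m j))" for s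
  proof
    assume "\<forall>j\<in>S. [s = u j] (mod m j)"
    then have "\<forall>j\<in>S. [s = x] (mod m j)" using x by (metis cong_sym cong_trans)
    then show "[s = x] (mod (\<Prod>j\<in>S. m j))" using cop by (intro coprime_cong_prod_nat) auto
  next
    assume "[s = x] (mod (\<Prod>j\<in>S. m j))"
    then have "[s = x] (mod m j)" if "j \<in> S" for j
      using that fin by (meson cong_dvd_modulus_nat dvd_prodI)
    then show "\<forall>j\<in>S. [s = u j] (mod m j)" using x cong_trans by blast
  qed
  then have "card {s\<in>{..<N}. \<forall>j\<in>S. [s = u j] (mod m j)} = card {s\<in>{..<N}. [s = x] (mod (\<Prod>j\<in>S. m j))}"
    by simp
  also have "\<dots> = N div (\<Prod>j\<in>S. m j)"
    using pos fin prod_dvd_if_pairwise_coprime[OF cop dvd] by (intro card_cong_lessThan) simp_all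
  finally show ?thesis .
qed

lemma card_linear_cong_lessThan:
  fixes N :: nat and m A B :: int
  assumes N: "0 < N"
  shows "card {i\<in>{..<N}. [m * int i + A = B] (mod int N)}
       = (if [A = B] (mod gcd m (int N)) then nat (gcd m (int N)) else 0)"
proof -
  define d where "d = gcd m (int N)"
  have dpos: "d > 0" using N by (simp add: d_def)
  obtain m' where m': "m = d * m'" unfolding d_def by (meson gcd_dvd1 dvdE)
  obtain N' where N': "int N = d * N'" unfolding d_def by (meson gcd_dvd2 dvdE)
  have N'pos: "N' > 0" using N' dpos N by (metis of_nat_0_less_iff zero_less_mult_pos)
  have cop: "coprime m' N'"
  proof -
    have "gcd m (int N) = d * gcd m' N'" using m' N' dpos by (simp add: gcd_mult_left)
    then show ?thesis using dpos d_def N by (auto simp: coprime_iff_gcd_eq_1)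
  qed
  show ?thesis
  proof (cases "[A = B] (mod d)")
    case False
    have "\<not> [m * int i + A = B] (mod int N)" for i
    proof
      assume "[m * int i + A = B] (mod int N)"
      then have "[m * int i + A = B] (mod d)" using N' by (auto intro: cong_dvd_modulus)
      moreover have "[m * int i + A = A] (mod d)" using m' by (simp add: cong_def mult.assoc)
      ultimately show False using False by (meson cong_sym cong_trans)
    qed
    then show ?thesis using False by (simp add: d_def)
  next
    case True
    then obtain c where c: "B - A = d * c" by (meson cong_iff_dvd_diff cong_sym dvdE)
    obtain w where w: "[m' * w = 1] (mod N')" using cong_solve_coprime_int[OF cop] by blast
    define r where "r = nat ((w * c) mod N')"
    have eq: "[m * int i + A = B] (mod int N) \<longleftrightarrow> [i = r] (mod nat N')" for i
    proof -
      have "m * int i + A - B = d * (m' * int i - c)"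
        using m' c by (simp add: algebra_simps)
      then have "[m * int i + A = B] (mod int N) \<longleftrightarrow> [m' * int i = c] (mod N')"
        using dpos by (simp add: cong_iff_dvd_diff N')
      also have "\<dots> \<longleftrightarrow> [int i = w * c] (mod N')"
      proof
        assume "[m' * int i = c] (mod N')"
        then have "[w * (m' * int i) = w * c] (mod N')" by (rule cong_scalar_left)
        moreover have "[w * (m' * int i) = int i] (mod N')"
          using cong_scalar_right[OF w, of "int i"] by (simp add: ac_simps)
        ultimately show "[int i = w * c] (mod N')" by (meson cong_sym cong_trans)
      next
        assume "[int i = w * c] (mod N')"
        then have "[m' * int i = m' * (w * c)] (mod N')" by (rule cong_scalar_left)
        moreover have "[m' * (w * c) = c] (mod N')"
          using cong_scalar_right[OF w, of c] by (simp add: ac_simps)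
        ultimately show "[m' * int i = c] (mod N')" by (meson cong_trans)
      qed
      also have "\<dots> \<longleftrightarrow> [int i = int r] (mod N')"
        using N'pos by (simp add: r_def cong_def)
      also have "\<dots> \<longleftrightarrow> [i = r] (mod nat N')"
        using cong_int_iff[of i r "nat N'"] N'pos by simp
      finally show ?thesis .
    qed
    have NN': "N = nat d * nat N'" using N' dpos N'pos by (simp add: nat_mult_distrib[symmetric])
    have "card {i\<in>{..<N}. [m * int i + A = B] (mod int N)} = card {i\<in>{..<N}. [i = r] (mod nat N')}"
      using eq by simp
    also have "\<dots> = nat d"
      using N'pos dpos by (subst card_cong_lessThan) (simp_all add: NN')
    finally show ?thesis using True by (simp add: d_def)
  qed
qed

definition halve_even :: "nat \<Rightarrow> nat" where
  "halve_even d = (if even d then d div 2 else d)"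

lemma cong_2_iff_parity: "[a = b] (mod 2) \<longleftrightarrow> (even a \<longleftrightarrow> even b)" for a b :: nat
  unfolding cong_def by (metis even_iff_mod_2_eq_zero odd_iff_mod_2_eq_one)

lemma coprime_if_coprime_halve_even:
  fixes a b :: nat
  assumes "coprime (halve_even a) b" "odd b"
  shows "coprime a b"
proof (cases "even a")
  case True
  then obtain h where "a = 2 * h" by blast
  then show ?thesis using assms by (simp add: halve_even_def)
qed (use assms in \<open>simp add: halve_even_def\<close>)

lemma exists_unique_even_halve:
  fixes d :: "'b \<Rightarrow> nat"
  assumes cop: "\<forall>i\<in>S. \<forall>j\<in>S. i \<noteq> j \<longrightarrow> coprime (halve_even (d i)) (halve_even (d j))"
  obtains j0 where "\<forall>j\<in>S - {j0}. odd (halve_even (d j))"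
    and "{j\<in>S. even (d j)} \<noteq> {} \<Longrightarrow> j0 \<in> {j\<in>S. even (d j)}"
proof (cases "\<exists>j\<in>S. even (halve_even (d j))")
  case True
  then obtain j0 where j0: "j0 \<in> S" "even (halve_even (d j0))" by blast
  then have "even (d j0)" by (auto simp: halve_even_def split: if_splits)
  moreover have "\<forall>j\<in>S - {j0}. odd (halve_even (d j))"
    using cop j0 by (metis DiffE coprime_common_divisor_nat dvd_refl even_iff_mod_2_eq_zero
        insertI1 mod2_eq_if odd_one)
  ultimately show ?thesis using that j0 by blast
next
  case False
  moreover obtain j0 where "{j\<in>S. even (d j)} \<noteq> {} \<Longrightarrow> j0 \<in> {j\<in>S. even (d j)}" by blast
  ultimately show ?thesis using that by blast
qed

lemma pairwise_coprime_refined_moduli: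
  fixes d :: "'b \<Rightarrow> nat"
  assumes cop: "\<forall>i\<in>S. \<forall>j\<in>S. i \<noteq> j \<longrightarrow> coprime (halve_even (d i)) (halve_even (d j))"
    and odd_halves: "\<forall>j\<in>S - {j0}. odd (halve_even (d j))"
  defines "m \<equiv> \<lambda>j. if j = j0 then d j else halve_even (d j)"
  shows "\<forall>i\<in>S. \<forall>j\<in>S. i \<noteq> j \<longrightarrow> coprime (m i) (m j)"
proof -
  have coprime_halve: "coprime (m i) (halve_even (d j))" if "i \<in> S" "j \<in> S - {j0}" "i \<noteq> j" for i j
  proof -
    have hij: "coprime (halve_even (d i)) (halve_even (d j))" using cop that by blast
    moreover have "odd (halve_even (d j))" using odd_halves that by blast
    ultimately have "coprime (d i) (halve_even (d j))" by (rule coprime_if_coprime_halve_even)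
    with hij show ?thesis by (cases "i = j0") (simp_all add: m_def)
  qed
  show ?thesis
  proof (intro ballI impI)
    fix i j assume ij: "i \<in> S" "j \<in> S" "i \<noteq> j"
    show "coprime (m i) (m j)"
    proof (cases "j = j0")
      case True
      then have "coprime (m j) (halve_even (d i))" using coprime_halve ij by simp
      then show ?thesis using True ij by (simp add: m_def ac_simps)
    next
      case False
      then show ?thesis using coprime_halve ij by (simp add: m_def)
    qed
  qed
qed

lemma card_cong_system_halved_moduli:
  fixes d u :: "'b \<Rightarrow> nat"
  assumes fin: "finite S" and d: "\<forall>j\<in>S. 0 < d j \<and> d j dvd N"
    and cop: "\<forall>i\<in>S. \<forall>j\<in>S. i \<noteq> j \<longrightarrow> coprime (halve_even (d i)) (halve_even (d j))"
  defines "E \<equiv> {j\<in>S. even (d j)}"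
  shows "int (card {s\<in>{..<N}. \<forall>j\<in>S. [s = u j] (mod d j)}) * (\<Prod>j\<in>S. int (d j))
       = (if \<forall>i\<in>E. \<forall>j\<in>E. even (u i) = even (u j) then 2 ^ (card E - 1) * int N else 0)"
proof -
  text \<open>At most one of the halved moduli is even; we keep the full modulus there.\<close>
  obtain j0 where odd_halves: "\<forall>j\<in>S - {j0}. odd (halve_even (d j))" and j0E: "E \<noteq> {} \<Longrightarrow> j0 \<in> E"
    using exists_unique_even_halve[OF cop] unfolding E_def by blast
  define m where "m j = (if j = j0 then d j else halve_even (d j))" for j
  have m_pos: "\<forall>j\<in>S. 0 < m j" using d by (auto simp: m_def halve_even_def elim!: evenE)
  have m_dvd: "\<forall>j\<in>S. m j dvd d j" by (auto simp: m_def halve_even_def)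
  have m_dvd_N: "\<forall>j\<in>S. m j dvd N" using m_dvd d dvd_trans by blast
  have d_eq: "d j = (if j \<in> E - {j0} then 2 * m j else m j)" if "j \<in> S" for j
    using that by (auto simp: m_def halve_even_def E_def)
  have m_coprime: "\<forall>i\<in>S. \<forall>j\<in>S. i \<noteq> j \<longrightarrow> coprime (m i) (m j)"
    unfolding m_def by (rule pairwise_coprime_refined_moduli[OF cop odd_halves])
  have parity: "even s = even (u j)" if "[s = u j] (mod d j)" "j \<in> E" for s j
  proof -
    have "2 dvd d j" using that(2) by (simp add: E_def)
    with that(1) have "[s = u j] (mod 2)" by (rule cong_dvd_modulus_nat)
    then show ?thesis using cong_2_iff_parity by blast
  qed
  have system_iff: "(\<forall>j\<in>S. [s = u j] (mod d j)) \<longleftrightarrow>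
      (\<forall>i\<in>E. \<forall>j\<in>E. even (u i) = even (u j)) \<and> (\<forall>j\<in>S. [s = u j] (mod m j))" for s
  proof
    assume h: "\<forall>j\<in>S. [s = u j] (mod d j)"
    have "even (u j) = even s" if "j \<in> E" for j
      using parity[of s j] h that unfolding E_def by blast
    moreover have "[s = u j] (mod m j)" if "j \<in> S" for j
      using h m_dvd that cong_dvd_modulus_nat by blast
    ultimately show "(\<forall>i\<in>E. \<forall>j\<in>E. even (u i) = even (u j)) \<and> (\<forall>j\<in>S. [s = u j] (mod m j))"
      by simp
  next
    assume h: "(\<forall>i\<in>E. \<forall>j\<in>E. even (u i) = even (u j)) \<and> (\<forall>j\<in>S. [s = u j] (mod m j))"
    show "\<forall>j\<in>S. [s = u j] (mod d j)"
    proof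
      fix j assume j: "j \<in> S"
      show "[s = u j] (mod d j)"
      proof (cases "j \<in> E - {j0}")
        case True
        then have "j0 \<in> E" using j0E by blast
        then have "[s = u j0] (mod m j0)" using h by (simp add: E_def)
        then have "[s = u j0] (mod d j0)" by (simp add: m_def)
        then have "even s = even (u j0)" using \<open>j0 \<in> E\<close> by (rule parity)
        moreover have "even (u j0) = even (u j)" using h \<open>j0 \<in> E\<close> True by blast
        ultimately have "[s = u j] (mod 2)" by (simp only: cong_2_iff_parity)
        moreover have "[s = u j] (mod m j)" using h j by blast
        moreover have "coprime 2 (m j)" using odd_halves True by (simp add: m_def E_def)
        ultimately have "[s = u j] (mod 2 * m j)" by (rule coprime_cong_mult_nat)
        then show ?thesis using j d_eq True by simp
      next
        case False
        then have "d j = m j" using d_eq[OF j] by presburger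
        then show ?thesis using h j by simp
      qed
    qed
  qed
  have card_E: "card (E - {j0}) = card E - 1"
    using j0E by (cases "E = {}") (simp_all add: card_Diff_singleton)
  have "(\<Prod>j\<in>S. int (d j)) = (\<Prod>j\<in>S. (if j \<in> E - {j0} then 2 else 1) * int (m j))"
    by (rule prod.cong) (auto simp: d_eq)
  also have "\<dots> = 2 ^ (card E - 1) * (\<Prod>j\<in>S. int (m j))"
  proof -
    have "S \<inter> (E - {j0}) = E - {j0}" by (auto simp: E_def)
    have "(\<Prod>j\<in>S. if j \<in> E - {j0} then 2 else 1::int)
        = (\<Prod>j\<in>S \<inter> {j. j \<in> E - {j0}}. 2) * (\<Prod>j\<in>S \<inter> - {j. j \<in> E - {j0}}. 1)"
      by (rule prod.If_cases[OF fin])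
    also have "\<dots> = (\<Prod>j\<in>E - {j0}. 2)"
      using \<open>S \<inter> (E - {j0}) = E - {j0}\<close> by (simp only: Collect_mem_eq prod.neutral_const mult_1_right)
    also have "\<dots> = 2 ^ (card E - 1)" using card_E by simp
    finally show ?thesis by (simp add: prod.distrib)
  qed
  finally have prod_d: "(\<Prod>j\<in>S. int (d j)) = 2 ^ (card E - 1) * (\<Prod>j\<in>S. int (m j))" .
  have N_eq: "int (N div (\<Prod>j\<in>S. m j)) * (\<Prod>j\<in>S. int (m j)) = int N"
    using prod_dvd_if_pairwise_coprime[OF m_coprime m_dvd_N]
    by (simp flip: of_nat_prod of_nat_mult)
  show ?thesis
  proof (cases "\<forall>i\<in>E. \<forall>j\<in>E. even (u i) = even (u j)")
    case True
    then have "{s\<in>{..<N}. \<forall>j\<in>S. [s = u j] (mod d j)} = {s\<in>{..<N}. \<forall>j\<in>S. [s = u j] (mod m j)}"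
      using system_iff by blast
    then have "card {s\<in>{..<N}. \<forall>j\<in>S. [s = u j] (mod d j)} = N div (\<Prod>j\<in>S. m j)"
      using card_cong_system_lessThan[OF fin m_pos m_coprime m_dvd_N] by simp
    then show ?thesis using True unfolding prod_d N_eq[symmetric] by (simp only: if_P[OF True] mult_ac)
  next
    case False
    then have "{s\<in>{..<N}. \<forall>j\<in>S. [s = u j] (mod d j)} = {}" using system_iff by blast
    then show ?thesis unfolding if_not_P[OF False] by simp
  qed
qed

lemma sum_even_subsets_signs:
  fixes x :: "'b \<Rightarrow> int"
  assumes fin: "finite E" and sign: "\<forall>j\<in>E. x j = 1 \<or> x j = -1"
  shows "(\<Sum>V | V \<subseteq> E \<and> even (card V). \<Prod>j\<in>V. x j)
       = (if (\<forall>j\<in>E. x j = 1) \<or> (\<forall>j\<in>E. x j = -1) then 2 ^ (card E - 1) else 0)"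
proof -
  have expand: "(\<Prod>j\<in>E. \<epsilon> * x j + 1) = (\<Sum>V\<in>Pow E. \<epsilon> ^ card V * (\<Prod>j\<in>V. x j))" for \<epsilon> :: int
    by (simp add: prod_add[OF fin] prod.distrib)
  have "(\<Prod>j\<in>E. x j + 1) + (\<Prod>j\<in>E. - x j + 1) = (\<Sum>V\<in>Pow E. (1 + (-1) ^ card V) * (\<Prod>j\<in>V. x j))"
    using expand[of 1] expand[of "-1"] by (simp add: sum.distrib[symmetric] algebra_simps)
  also have "\<dots> = (\<Sum>V | V \<subseteq> E \<and> even (card V). 2 * (\<Prod>j\<in>V. x j))"
    using fin by (intro sum.mono_neutral_cong_right) auto
  finally have twice: "2 * (\<Sum>V | V \<subseteq> E \<and> even (card V). \<Prod>j\<in>V. x j)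
      = (\<Prod>j\<in>E. x j + 1) + (\<Prod>j\<in>E. - x j + 1)" by (simp add: sum_distrib_left)
  have factor: "(\<Prod>j\<in>E. \<epsilon> * x j + 1) = (if \<forall>j\<in>E. x j = \<epsilon> then 2 ^ card E else 0)"
    if "\<epsilon> = 1 \<or> \<epsilon> = -1" for \<epsilon>
    using fin sign that by (induction E rule: finite_induct) auto
  have "2 * (\<Sum>V | V \<subseteq> E \<and> even (card V). \<Prod>j\<in>V. x j)
      = (if \<forall>j\<in>E. x j = 1 then 2 ^ card E else 0) + (if \<forall>j\<in>E. x j = -1 then 2 ^ card E else 0)"
    unfolding twice factor[of 1, simplified, symmetric] factor[of "-1", simplified, symmetric] by simp
  moreover have "2 ^ card E = 2 * (2::int) ^ (card E - 1)" if "E \<noteq> {}"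
    using fin that by (simp add: card_gt_0_iff power_eq_if)
  moreover have "\<not> ((\<forall>j\<in>E. x j = 1) \<and> (\<forall>j\<in>E. x j = -1))" if "E \<noteq> {}"
    using that by fastforce
  ultimately show ?thesis
    by (cases "E = {}") (auto split: if_splits)
qed

lemma sum_prod_cong_indicator_halved_moduli:
  fixes d u :: "'b \<Rightarrow> nat"
  assumes fin: "finite S" and d: "\<forall>j\<in>S. 0 < d j \<and> d j dvd N"
    and cop: "\<forall>i\<in>S. \<forall>j\<in>S. i \<noteq> j \<longrightarrow> coprime (halve_even (d i)) (halve_even (d j))"
  shows "(\<Sum>s<N. \<Prod>j\<in>S. if [s = u j] (mod d j) then int (d j) else 0)
       = int N * (\<Sum>V | V \<subseteq> {j\<in>S. even (d j)} \<and> even (card V). \<Prod>j\<in>V. (-1) ^ u j)"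
proof -
  define E where "E = {j\<in>S. even (d j)}"
  have "(\<Prod>j\<in>S. if [s = u j] (mod d j) then int (d j) else 0)
      = (if \<forall>j\<in>S. [s = u j] (mod d j) then \<Prod>j\<in>S. int (d j) else 0)" for s
    using fin by (auto intro: prod_zero)
  then have "(\<Sum>s<N. \<Prod>j\<in>S. if [s = u j] (mod d j) then int (d j) else 0)
      = int (card {s\<in>{..<N}. \<forall>j\<in>S. [s = u j] (mod d j)}) * (\<Prod>j\<in>S. int (d j))"
    by (simp add: sum.If_cases Int_def)
  also have "\<dots> = (if \<forall>i\<in>E. \<forall>j\<in>E. even (u i) = even (u j) then 2 ^ (card E - 1) * int N else 0)"
    unfolding E_def by (rule card_cong_system_halved_moduli[OF fin d cop])
  also have "\<dots> = int N * (\<Sum>V | V \<subseteq> E \<and> even (card V). \<Prod>j\<in>V. (-1) ^ u j)"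
  proof -
    have "finite E" using fin by (simp add: E_def)
    then have "(\<Sum>V | V \<subseteq> E \<and> even (card V). \<Prod>j\<in>V. (-1::int) ^ u j)
        = (if (\<forall>j\<in>E. (-1::int) ^ u j = 1) \<or> (\<forall>j\<in>E. (-1::int) ^ u j = -1) then 2 ^ (card E - 1) else 0)"
      by (rule sum_even_subsets_signs) (simp add: minus_one_power_iff)
    moreover have "(\<forall>i\<in>E. \<forall>j\<in>E. even (u i) = even (u j)) \<longleftrightarrow>
        (\<forall>j\<in>E. (-1::int) ^ u j = 1) \<or> (\<forall>j\<in>E. (-1::int) ^ u j = -1)"
      by (simp add: minus_one_power_iff) blast
    ultimately show ?thesis by simp
  qed
  finally show ?thesis by (simp add: E_def)
qed

section \<open>Finite fields and discrete logarithms\<close>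

lemma card_ge_2: "2 \<le> CARD('a::{finite,field})"
proof -
  have "card {0::'a, 1} \<le> CARD('a)" by (rule card_mono) auto
  then show ?thesis by simp
qed

lemma card_units_pos: "0 < CARD('a::{finite,field}) - 1"
  using card_ge_2[where 'a='a] by simp

lemma card_nonzero: "card (UNIV - {0::'a::{finite,field}}) = CARD('a) - 1"
  by (simp add: card_Diff_singleton)

lemma power_card_minus_1:
  fixes x :: "'a::{finite,field}"
  assumes "x \<noteq> 0"
  shows "x ^ (CARD('a) - 1) = 1"
proof -
  have bij: "bij_betw (\<lambda>y. x * y) (UNIV - {0::'a}) (UNIV - {0::'a})"
    using assms by (intro bij_betwI[of _ _ _ "\<lambda>y. y / x"]) auto
  have "(\<Prod>y\<in>UNIV - {0::'a}. x * y) = (\<Prod>y\<in>UNIV - {0::'a}. y)"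
    using prod.reindex_bij_betw[OF bij, of "\<lambda>y. y"] by simp
  moreover have "(\<Prod>y\<in>UNIV - {0::'a}. x * y) = x ^ (CARD('a) - 1) * (\<Prod>y\<in>UNIV - {0::'a}. y)"
    by (simp add: prod.distrib card_nonzero)
  moreover have "(\<Prod>y\<in>UNIV - {0::'a}. y) \<noteq> 0" by simp
  ultimately show ?thesis by simp
qed

definition type_ring :: "'a::field ring" where
  "type_ring = \<lparr>carrier = UNIV, mult = (*), one = 1, zero = 0, add = (+)\<rparr>"

lemma field_type_ring: "field (type_ring :: 'a::field ring)"
proof -
  have cr: "cring (type_ring :: 'a ring)" unfolding type_ring_def
  proof (rule cringI)
    show "abelian_group \<lparr>carrier = UNIV::'a set, mult = (*), one = 1, zero = 0::'a, add = (+)\<rparr>"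
      by (rule abelian_groupI) (auto intro: left_minus)
    show "Group.comm_monoid \<lparr>carrier = UNIV::'a set, mult = (*), one = 1, zero = 0::'a, add = (+)\<rparr>"
      by (rule comm_monoidI) (simp_all add: mult.assoc mult.commute)
  qed (auto simp: distrib_right)
  show ?thesis
  proof (rule field.intro)
    show "domain (type_ring :: 'a ring)"
      by (rule domain.intro[OF cr], rule domain_axioms.intro) (auto simp: type_ring_def)
    show "field_axioms (type_ring :: 'a ring)"
      unfolding field_axioms_def Units_def type_ring_def
      by auto (metis field_class.field_inverse mult.commute)
  qed
qed

locale field_generator =
  fixes g :: "'a::{finite,field}"
  assumes generator_nonzero: "g \<noteq> 0" and generates: "\<And>x. x \<noteq> 0 \<Longrightarrow> \<exists>i. x = g ^ i"

lemma field_generator_exists: "\<exists>g::'a::{finite,field}. field_generator g"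
proof -
  interpret field "type_ring :: 'a ring" by (rule field_type_ring)
  have "finite (carrier (type_ring :: 'a ring))" by simp
  note generator = finite_field_mult_group_has_gen[OF this]
  then obtain a where a: "a \<in> carrier type_ring - {\<zero>\<^bsub>type_ring\<^esub>}"
      "carrier (type_ring :: 'a ring) - {\<zero>\<^bsub>type_ring\<^esub>} = {a [^]\<^bsub>type_ring\<^esub> i | i::nat. i \<in> UNIV}"
    unfolding mult_of_simps by blast
  have "a [^]\<^bsub>type_ring\<^esub> (i::nat) = a ^ i" for i by (induct i) (simp_all add: type_ring_def)
  moreover have "carrier (type_ring :: 'a ring) = UNIV" "\<zero>\<^bsub>type_ring :: 'a ring\<^esub> = 0"
    by (simp_all add: type_ring_def)
  ultimately show ?thesis using a by (intro exI[of _ a]) (auto simp: field_generator_def)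
qed

context field_generator
begin

lemma generator_power_mod: "g ^ i = g ^ (i mod (CARD('a) - 1))"
proof -
  have "g ^ i = g ^ ((CARD('a) - 1) * (i div (CARD('a) - 1)) + i mod (CARD('a) - 1))" by simp
  also have "\<dots> = (g ^ (CARD('a) - 1)) ^ (i div (CARD('a) - 1)) * g ^ (i mod (CARD('a) - 1))" by (simp only: power_add power_mult)
  finally show ?thesis using power_card_minus_1[OF generator_nonzero] by simp
qed

lemma generator_powers_image: "(\<lambda>i. g ^ i) ` {..<(CARD('a) - 1)} = (UNIV - {0::'a})"
proof (intro equalityI subsetI)
  fix x assume "x \<in> (\<lambda>i. g ^ i) ` {..<(CARD('a) - 1)}" then show "x \<in> (UNIV - {0::'a})" using generator_nonzero by auto
next
  fix x assume "x \<in> (UNIV - {0::'a})"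
  then obtain i where "x = g ^ i" using generates by auto
  then have "x = g ^ (i mod (CARD('a) - 1))" using generator_power_mod by simp
  then show "x \<in> (\<lambda>i. g ^ i) ` {..<(CARD('a) - 1)}" using card_units_pos[where 'a='a] by auto
qed

lemma inj_on_generator_powers: "inj_on (\<lambda>i. g ^ i) {..<(CARD('a) - 1)}"
proof (rule eq_card_imp_inj_on)
  show "card ((\<lambda>i. g ^ i) ` {..<(CARD('a) - 1)}) = card {..<(CARD('a) - 1)}" unfolding generator_powers_image by (simp add: card_nonzero)
qed simp

lemma generator_power_eq_iff: "g ^ i = g ^ j \<longleftrightarrow> [i = j] (mod (CARD('a) - 1))"
proof
  assume "g ^ i = g ^ j"
  then have "g ^ (i mod (CARD('a) - 1)) = g ^ (j mod (CARD('a) - 1))" using generator_power_mod by metis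
  then have "i mod (CARD('a) - 1) = j mod (CARD('a) - 1)" using inj_on_generator_powers card_units_pos[where 'a='a] by (auto dest: inj_onD)
  then show "[i = j] (mod (CARD('a) - 1))" by (simp add: cong_def)
next
  assume "[i = j] (mod (CARD('a) - 1))"
  then show "g ^ i = g ^ j" using generator_power_mod by (metis cong_def)
qed

definition dlog :: "'a \<Rightarrow> nat" where "dlog x = inv_into {..<(CARD('a) - 1)} (\<lambda>i. g ^ i) x"

lemma dlog_less: "x \<noteq> 0 \<Longrightarrow> dlog x < (CARD('a) - 1)"
  unfolding dlog_def using generator_powers_image by (metis DiffI UNIV_I inv_into_into lessThan_iff singletonD)

lemma generator_power_dlog: "x \<noteq> 0 \<Longrightarrow> g ^ dlog x = x"
  unfolding dlog_def using generator_powers_image by (metis DiffI UNIV_I f_inv_into_f singletonD)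

lemma cong_dlog: "x \<noteq> 0 \<Longrightarrow> g ^ i = x \<Longrightarrow> [i = dlog x] (mod (CARD('a) - 1))"
  using generator_power_dlog generator_power_eq_iff by metis

lemma dlog_mult: "x \<noteq> 0 \<Longrightarrow> y \<noteq> 0 \<Longrightarrow> [dlog (x*y) = dlog x + dlog y] (mod (CARD('a) - 1))"
proof -
  assume xy: "x \<noteq> 0" "y \<noteq> 0"
  then have "g ^ (dlog x + dlog y) = x * y" using generator_power_dlog by (simp add: power_add)
  then show ?thesis using cong_dlog[of "x*y"] xy by (simp add: cong_sym)
qed

lemma dlog_generator_power: "[dlog (g ^ i) = i] (mod (CARD('a) - 1))"
  using cong_dlog[of "g^i" i] generator_nonzero by (simp add: cong_sym)

lemma mult_power_generator_power: "a \<noteq> 0 \<Longrightarrow> a * (g ^ i) ^ m = g ^ (m * i + dlog a)"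
proof -
  assume a: "a \<noteq> 0"
  have "(g ^ i) ^ m = g ^ (m * i)" by (metis power_mult mult.commute)
  then show ?thesis using generator_power_dlog[OF a] by (simp add: power_add mult.commute)
qed

lemma card_binomial_solutions:
  assumes a: "a \<noteq> 0" and y: "y \<noteq> 0" and m: "0 < m"
  shows "card {x. a * x ^ m = y} = (if [dlog a = dlog y] (mod gcd m (CARD('a) - 1)) then gcd m (CARD('a) - 1) else 0)"
proof -
  have set: "{x. a * x ^ m = y} = (\<lambda>i. g ^ i) ` {i\<in>{..<(CARD('a) - 1)}. [m * i + dlog a = dlog y] (mod (CARD('a) - 1))}"
  proof (intro equalityI subsetI)
    fix x assume "x \<in> {x. a * x ^ m = y}"
    then have x: "a * x ^ m = y" by simp
    then have x0: "x \<noteq> 0" using y m by auto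
    have "g ^ (m * dlog x + dlog a) = a * x ^ m"
      using mult_power_generator_power[OF a, of "dlog x" m] generator_power_dlog[OF x0] by simp
    then have "[m * dlog x + dlog a = dlog y] (mod (CARD('a) - 1))" using cong_dlog[OF y] x by simp
    then show "x \<in> (\<lambda>i. g ^ i) ` {i\<in>{..<(CARD('a) - 1)}. [m * i + dlog a = dlog y] (mod (CARD('a) - 1))}"
      using dlog_less[OF x0] generator_power_dlog[OF x0] by (intro image_eqI[of _ _ "dlog x"]) auto
  next
    fix x assume "x \<in> (\<lambda>i. g ^ i) ` {i\<in>{..<(CARD('a) - 1)}. [m * i + dlog a = dlog y] (mod (CARD('a) - 1))}"
    then obtain i where i: "x = g ^ i" "[m * i + dlog a = dlog y] (mod (CARD('a) - 1))" by auto
    have "a * x ^ m = g ^ (m * i + dlog a)"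
      using mult_power_generator_power[OF a, of i m] i(1) by simp
    also have "\<dots> = g ^ (dlog y)" using i(2) generator_power_eq_iff by blast
    finally show "x \<in> {x. a * x ^ m = y}" using generator_power_dlog[OF y] by simp
  qed
  have "card {x. a * x ^ m = y} = card {i\<in>{..<(CARD('a) - 1)}. [m * i + dlog a = dlog y] (mod (CARD('a) - 1))}"
    unfolding set by (rule card_image) (rule inj_on_subset[OF inj_on_generator_powers], auto)
  also have "\<dots> = card {i\<in>{..<(CARD('a) - 1)}. [int m * int i + int (dlog a) = int (dlog y)] (mod int (CARD('a) - 1))}"
    by (simp add: cong_int_iff[symmetric])
  also have "\<dots> = (if [int (dlog a) = int (dlog y)] (mod gcd (int m) (int (CARD('a) - 1))) then nat (gcd (int m) (int (CARD('a) - 1))) else 0)"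
    by (rule card_linear_cong_lessThan[OF card_units_pos[where 'a='a]])
  also have "\<dots> = (if [dlog a = dlog y] (mod gcd m (CARD('a) - 1)) then gcd m (CARD('a) - 1) else 0)"
    by (simp add: gcd_int_def cong_int_iff nat_diff_distrib')
  finally show ?thesis .
qed

lemma card_binomial_zero: "a \<noteq> 0 \<Longrightarrow> 0 < m \<Longrightarrow> card {x. a * x ^ m = (0::'a)} = 1"
proof -
  assume "a \<noteq> 0" "0 < m"
  then have "{x. a * x ^ m = (0::'a)} = {0}" by auto
  then show ?thesis by simp
qed

lemma card_unique_unit_solution:
  assumes u: "u \<noteq> 0" and v: "v \<noteq> 0" and cop: "gcd (int A - int B) (int (CARD('a) - 1)) = 1"
  shows "card {l\<in>(UNIV - {0::'a}). l ^ B * u = l ^ A * v} = 1"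
proof -
  have set: "{l\<in>(UNIV - {0::'a}). l ^ B * u = l ^ A * v} = (\<lambda>i. g ^ i) ` {i\<in>{..<(CARD('a) - 1)}. [B * i + dlog u = A * i + dlog v] (mod (CARD('a) - 1))}"
  proof (intro equalityI subsetI)
    fix l assume "l \<in> {l\<in>(UNIV - {0::'a}). l ^ B * u = l ^ A * v}"
    then have l: "l \<noteq> 0" "l ^ B * u = l ^ A * v" by auto
    have e1: "l ^ B * u = g ^ (B * dlog l + dlog u)"
      using mult_power_generator_power[OF u, of "dlog l" B] generator_power_dlog[OF l(1)] by (simp add: mult.commute)
    have e2: "l ^ A * v = g ^ (A * dlog l + dlog v)"
      using mult_power_generator_power[OF v, of "dlog l" A] generator_power_dlog[OF l(1)] by (simp add: mult.commute)
    have "[B * dlog l + dlog u = A * dlog l + dlog v] (mod (CARD('a) - 1))" using l(2) e1 e2 generator_power_eq_iff by simp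
    then show "l \<in> (\<lambda>i. g ^ i) ` {i\<in>{..<(CARD('a) - 1)}. [B * i + dlog u = A * i + dlog v] (mod (CARD('a) - 1))}"
      using dlog_less[OF l(1)] generator_power_dlog[OF l(1)] by (intro image_eqI[of _ _ "dlog l"]) auto
  next
    fix l assume "l \<in> (\<lambda>i. g ^ i) ` {i\<in>{..<(CARD('a) - 1)}. [B * i + dlog u = A * i + dlog v] (mod (CARD('a) - 1))}"
    then obtain i where i: "l = g ^ i" "[B * i + dlog u = A * i + dlog v] (mod (CARD('a) - 1))" by auto
    have e1: "l ^ B * u = g ^ (B * i + dlog u)"
      using mult_power_generator_power[OF u, of i B] i(1) by (simp add: mult.commute)
    have e2: "l ^ A * v = g ^ (A * i + dlog v)"
      using mult_power_generator_power[OF v, of i A] i(1) by (simp add: mult.commute)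
    show "l \<in> {l\<in>(UNIV - {0::'a}). l ^ B * u = l ^ A * v}" using e1 e2 i(2) generator_power_eq_iff i(1) generator_nonzero by auto
  qed
  have "card {l\<in>(UNIV - {0::'a}). l ^ B * u = l ^ A * v} = card {i\<in>{..<(CARD('a) - 1)}. [B * i + dlog u = A * i + dlog v] (mod (CARD('a) - 1))}"
    unfolding set by (rule card_image) (rule inj_on_subset[OF inj_on_generator_powers], auto)
  also have "\<dots> = card {i\<in>{..<(CARD('a) - 1)}. [(int B - int A) * int i + int (dlog u) = int (dlog v)] (mod int (CARD('a) - 1))}"
  proof -
    have "[B * i + dlog u = A * i + dlog v] (mod (CARD('a) - 1)) \<longleftrightarrow> [(int B - int A) * int i + int (dlog u) = int (dlog v)] (mod int (CARD('a) - 1))" for i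
    proof -
      have "[B * i + dlog u = A * i + dlog v] (mod (CARD('a) - 1)) \<longleftrightarrow> [int B * int i + int (dlog u) = int A * int i + int (dlog v)] (mod int (CARD('a) - 1))"
        by (simp add: cong_int_iff[symmetric])
      also have "\<dots> \<longleftrightarrow> [(int B - int A) * int i + int (dlog u) = int (dlog v)] (mod int (CARD('a) - 1))"
        by (simp add: cong_iff_dvd_diff algebra_simps)
      finally show ?thesis .
    qed
    then show ?thesis by simp
  qed
  also have "\<dots> = 1"
  proof -
    have "gcd (int B - int A) (int (CARD('a) - 1)) = 1" using cop
      by (metis gcd_neg1_int minus_diff_eq)
    then show ?thesis by (subst card_linear_cong_lessThan[OF card_units_pos[where 'a='a]]) auto
  qed
  finally show ?thesis .
qed

end

section \<open>The quadratic character\<close>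

lemma quad_char_0 [simp]: "quad_char (0::'a::field) = 0" by (simp add: quad_char_def)

lemma quad_char_square: "(x::'a::field) \<noteq> 0 \<Longrightarrow> quad_char x * quad_char x = 1"
  by (simp add: quad_char_def)

context field_generator
begin

lemma quad_char_1: "quad_char (1::'a) = 1"
  by (simp add: quad_char_def) (metis power_one)

lemma cong_parity: "even (CARD('a) - 1) \<Longrightarrow> [i = j] (mod (CARD('a) - 1)) \<Longrightarrow> even i = even j"
  by (metis cong_2_iff_parity cong_dvd_modulus_nat)

lemma quad_char_dlog:
  assumes ev: "even (CARD('a) - 1)" and x: "(x::'a) \<noteq> 0"
  shows "quad_char x = (-1) ^ dlog x"
proof -
  have "(\<exists>y. y ^ 2 = x) \<longleftrightarrow> even (dlog x)"
  proof
    assume "\<exists>y. y ^ 2 = x"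
    then obtain y where y: "y ^ 2 = x" by blast
    then have y0: "y \<noteq> 0" using x by auto
    have "g ^ (2 * dlog y) = x" using generator_power_dlog[OF y0] y by (metis power_mult mult.commute)
    then have "[2 * dlog y = dlog x] (mod (CARD('a) - 1))" using cong_dlog[OF x] by simp
    then show "even (dlog x)" using cong_parity[OF ev] by fastforce
  next
    assume "even (dlog x)"
    then obtain k where k: "dlog x = 2 * k" by (elim evenE)
    have "(g ^ k) ^ 2 = x" using generator_power_dlog[OF x] k by (metis power_mult mult.commute)
    then show "\<exists>y. y ^ 2 = x" by blast
  qed
  then show ?thesis using x by (auto simp: quad_char_def)
qed

lemma quad_char_mult:
  assumes ev: "even (CARD('a) - 1)"
  shows "quad_char (x * y) = quad_char x * quad_char (y::'a)"
proof (cases "x = 0 \<or> y = 0")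
  case True then show ?thesis by auto
next
  case False
  then have xy: "x \<noteq> 0" "y \<noteq> 0" "x * y \<noteq> 0" by auto
  have "even (dlog (x*y)) = even (dlog x + dlog y)" using dlog_mult[OF xy(1,2)] cong_parity[OF ev] by blast
  then have "(-1::int) ^ dlog (x*y) = (-1) ^ (dlog x + dlog y)"
    by (metis neg_one_even_power neg_one_odd_power)
  then show ?thesis using quad_char_dlog[OF ev] xy by (simp add: power_add)
qed

lemma quad_char_power: "even (CARD('a) - 1) \<Longrightarrow> quad_char ((x::'a) ^ j) = quad_char x ^ j"
  by (induction j) (simp_all add: quad_char_1 quad_char_mult)

lemma quad_char_prod:
  assumes ev: "even (CARD('a) - 1)" and fin: "finite A"
  shows "quad_char (\<Prod>j\<in>A. (f j::'a)) = (\<Prod>j\<in>A. quad_char (f j))"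
  using fin by (induction A rule: finite_induct) (simp_all add: quad_char_1 quad_char_mult[OF ev])

lemma sum_neg_one_power_even: "even N \<Longrightarrow> (\<Sum>i<N. (-1::int) ^ i) = 0"
proof -
  assume "even N"
  then obtain k where "N = 2 * k" by (elim evenE)
  moreover have "(\<Sum>i<2*k. (-1::int) ^ i) = 0" by (induction k) auto
  ultimately show ?thesis by simp
qed

lemma sum_UNIV_nonzero: "(\<Sum>x\<in>UNIV. f x) = (\<Sum>x\<in>UNIV - {0::'a}. f x) + f 0" for f :: "'a \<Rightarrow> int"
  by (metis add.commute finite_class.finite_UNIV iso_tuple_UNIV_I sum.remove)

lemma sum_quad_char:
  assumes ev: "even (CARD('a) - 1)"
  shows "(\<Sum>x\<in>UNIV. quad_char (x::'a)) = 0"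
proof -
  have "(\<Sum>x\<in>UNIV. quad_char (x::'a)) = (\<Sum>x\<in>UNIV - {0::'a}. quad_char x)" by (simp add: sum_UNIV_nonzero)
  also have "\<dots> = (\<Sum>i<CARD('a) - 1. quad_char (g ^ i))"
    unfolding generator_powers_image[symmetric] by (rule sum.reindex[OF inj_on_generator_powers, unfolded comp_def])
  also have "\<dots> = (\<Sum>i<CARD('a) - 1. (-1) ^ i)"
  proof (rule sum.cong[OF refl])
    fix i assume "i \<in> {..<CARD('a) - 1}"
    moreover have "dlog (g ^ i) < CARD('a) - 1" using dlog_less generator_nonzero by simp
    ultimately have "dlog (g ^ i) = i" using dlog_generator_power[of i] by (simp add: cong_def)
    then show "quad_char (g ^ i) = (-1) ^ i" using quad_char_dlog[OF ev] generator_nonzero by simp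
  qed
  also have "\<dots> = 0" using ev by (rule sum_neg_one_power_even)
  finally show ?thesis .
qed

lemma sum_quad_char_shift:
  assumes ev: "even (CARD('a) - 1)"
  shows "(\<Sum>y\<in>UNIV. quad_char (w - y::'a)) = 0"
proof -
  have "(\<Sum>y\<in>UNIV. quad_char (w - y::'a)) = (\<Sum>z\<in>UNIV. quad_char (z::'a))"
  proof -
    have b: "bij_betw (\<lambda>y. w - y) UNIV (UNIV::'a set)" by (rule bij_betwI[of _ _ _ "\<lambda>y. w - y"]) auto
    show ?thesis using sum.reindex_bij_betw[OF b, of "quad_char :: 'a \<Rightarrow> int"] by simp
  qed
  then show ?thesis using sum_quad_char[OF ev] by simp
qed

lemma sum_quad_char_jacobi:
  assumes ev: "even (CARD('a) - 1)"
  shows "(\<Sum>y\<in>UNIV. quad_char y * quad_char (w - y::'a))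
       = quad_char (-1::'a) * (if w = 0 then int (CARD('a)) - 1 else -1)"
proof (cases "w = 0")
  case True
  have "(\<Sum>y\<in>UNIV. quad_char y * quad_char (w - y::'a)) = (\<Sum>y\<in>UNIV - {0::'a}. quad_char y * quad_char (- y))"
    using True by (simp add: sum_UNIV_nonzero)
  also have "\<dots> = (\<Sum>y\<in>UNIV - {0::'a}. quad_char (-1::'a))"
  proof (rule sum.cong[OF refl])
    fix y :: 'a assume "y \<in> UNIV - {0}"
    then have "quad_char y * quad_char y = 1" by (simp add: quad_char_square)
    moreover have "quad_char (-y) = quad_char (-1::'a) * quad_char y"
      using quad_char_mult[OF ev, of "-1" y] by simp
    ultimately show "quad_char y * quad_char (- y) = quad_char (-1::'a)"
      by (metis mult.left_commute mult.right_neutral)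
  qed
  also have "\<dots> = quad_char (-1::'a) * (int (CARD('a)) - 1)"
    using card_nonzero card_ge_2[where 'a='a] by (simp add: of_nat_diff)
  finally show ?thesis using True by simp
next
  case False
  have "(\<Sum>y\<in>UNIV. quad_char y * quad_char (w - y::'a)) = (\<Sum>y\<in>UNIV - {0::'a}. quad_char y * quad_char (w - y))"
    by (simp add: sum_UNIV_nonzero)
  also have "\<dots> = (\<Sum>y\<in>UNIV - {0::'a}. quad_char (w / y - 1))"
  proof (rule sum.cong[OF refl])
    fix y :: 'a assume "y \<in> UNIV - {0}"
    then have y: "y \<noteq> 0" by simp
    have "w - y = y * (w / y - 1)" using y by (simp add: field_simps)
    then have "quad_char (w - y) = quad_char y * quad_char (w / y - 1)" using quad_char_mult[OF ev] by simp
    then show "quad_char y * quad_char (w - y) = quad_char (w / y - 1)"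
      using quad_char_square[OF y] by (metis mult.assoc mult_1)
  qed
  also have "\<dots> = (\<Sum>z\<in>UNIV - {0::'a}. quad_char (z - 1))"
    using False by (intro sum.reindex_bij_witness[of _ "\<lambda>z. w / z" "\<lambda>y. w / y"]) auto
  also have "\<dots> = (\<Sum>z\<in>UNIV. quad_char (z - 1::'a)) - quad_char (-1::'a)"
    by (simp add: sum_UNIV_nonzero)
  also have "(\<Sum>z\<in>UNIV. quad_char (z - 1::'a)) = 0"
  proof -
    have "(\<Sum>z\<in>UNIV. quad_char (z - 1::'a)) = (\<Sum>z\<in>UNIV. quad_char (z::'a))"
    proof -
      have b: "bij_betw (\<lambda>y. y - 1) UNIV (UNIV::'a set)" by (rule bij_betwI[of _ _ _ "\<lambda>y. y + 1"]) auto
      show ?thesis using sum.reindex_bij_betw[OF b, of "quad_char :: 'a \<Rightarrow> int"] by simp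
    qed
    then show ?thesis using sum_quad_char[OF ev] by simp
  qed
  finally show ?thesis using False by simp
qed

end

section \<open>Additive convolutions\<close>

definition convolution :: "nat set \<Rightarrow> 'a::{finite,field} set \<Rightarrow> (nat \<Rightarrow> 'a \<Rightarrow> int) \<Rightarrow> 'a \<Rightarrow> int" where
  "convolution S D \<phi> w = (\<Sum>c\<in>{c\<in>PiE S (\<lambda>_. D). (\<Sum>j\<in>S. c j) = w}. \<Prod>j\<in>S. \<phi> j (c j))"

lemma convolution_empty: "convolution {} D \<phi> w = (if w = 0 then 1 else 0)"
  by (auto simp: convolution_def)

lemma convolution_insert:
  assumes fin: "finite S" and i: "i \<notin> S"
  shows "convolution (insert i S) D \<phi> w = (\<Sum>y\<in>D. \<phi> i y * convolution S D \<phi> (w - y))"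
proof -
  define A where "A = {c\<in>PiE (insert i S) (\<lambda>_. D). (\<Sum>j\<in>insert i S. c j) = w}"
  define B where "B = Sigma D (\<lambda>y. {c\<in>PiE S (\<lambda>_. D). (\<Sum>j\<in>S. c j) = w - y})"
  define h where "h = (\<lambda>(y::'a, c::nat \<Rightarrow> 'a). c(i := y))"
  have sumupd: "(\<Sum>j\<in>S. (c(i := y)) j) = (\<Sum>j\<in>S. c j)" for c y
    using i by (intro sum.cong) auto
  have produpd: "(\<Prod>j\<in>S. \<phi> j ((c(i := y)) j)) = (\<Prod>j\<in>S. \<phi> j (c j))" for c y
    using i by (intro prod.cong) auto
  have inj: "inj_on h B"
  proof (rule inj_onI)
    fix p p' assume p: "p \<in> B" "p' \<in> B" "h p = h p'"
    obtain y c where yc: "p = (y, c)" by fastforce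
    obtain y' c' where yc': "p' = (y', c')" by fastforce
    have "c i = undefined" "c' i = undefined" using p yc yc' i by (auto simp: B_def PiE_def extensional_def)
    moreover have "c(i := y) = c'(i := y')" using p(3) yc yc' by (simp add: h_def)
    ultimately have "y = y'" "c = c'" by (metis fun_upd_same, metis fun_upd_triv fun_upd_upd)
    then show "p = p'" using yc yc' by simp
  qed
  have img: "h ` B = A"
  proof (intro equalityI subsetI)
    fix x assume "x \<in> h ` B"
    then obtain y c where yc: "y \<in> D" "c \<in> PiE S (\<lambda>_. D)" "(\<Sum>j\<in>S. c j) = w - y" "x = c(i := y)"
      by (auto simp: B_def h_def)
    have "x \<in> PiE (insert i S) (\<lambda>_. D)" using yc by (auto simp: PiE_def extensional_def Pi_def)
    moreover have "(\<Sum>j\<in>insert i S. x j) = w"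
    proof -
      have "(\<Sum>j\<in>S. x j) = (\<Sum>j\<in>S. c j)" using yc(4) sumupd by simp
      moreover have "x i = y" using yc(4) by simp
      ultimately show ?thesis using fin i yc(3) by simp
    qed
    ultimately show "x \<in> A" by (simp add: A_def)
  next
    fix x assume "x \<in> A"
    then have x: "x \<in> PiE (insert i S) (\<lambda>_. D)" "(\<Sum>j\<in>insert i S. x j) = w" by (auto simp: A_def)
    have "x(i := undefined) \<in> PiE S (\<lambda>_. D)" using x(1) i
      by (auto simp: PiE_def extensional_def Pi_def)
    moreover have "(\<Sum>j\<in>S. (x(i := undefined)) j) = w - x i"
    proof -
      have "(\<Sum>j\<in>S. (x(i := undefined)) j) = (\<Sum>j\<in>S. x j)" using sumupd by simp
      then show ?thesis using x(2) fin i by (simp add: algebra_simps)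
    qed
    moreover have "x i \<in> D" using x(1) by auto
    ultimately have "(x i, x(i := undefined)) \<in> B" by (simp add: B_def)
    moreover have "h (x i, x(i := undefined)) = x" by (simp add: h_def)
    ultimately show "x \<in> h ` B" by (metis image_eqI)
  qed
  have "convolution (insert i S) D \<phi> w = (\<Sum>c\<in>A. \<Prod>j\<in>insert i S. \<phi> j (c j))" by (simp add: convolution_def A_def)
  also have "\<dots> = (\<Sum>p\<in>B. \<Prod>j\<in>insert i S. \<phi> j (h p j))"
    unfolding img[symmetric] by (rule sum.reindex[OF inj, unfolded comp_def])
  also have "\<dots> = (\<Sum>p\<in>B. \<phi> i (fst p) * (\<Prod>j\<in>S. \<phi> j (snd p j)))"
  proof (rule sum.cong[OF refl])
    fix p assume "p \<in> B"
    obtain y c where p: "p = (y, c)" by fastforce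
    have "(\<Prod>j\<in>insert i S. \<phi> j (h p j)) = \<phi> i (h p i) * (\<Prod>j\<in>S. \<phi> j (h p j))"
      using fin i by simp
    also have "h p i = y" by (simp add: p h_def)
    also have "(\<Prod>j\<in>S. \<phi> j (h p j)) = (\<Prod>j\<in>S. \<phi> j (c j))"
      using produpd[of c y] by (simp add: p h_def)
    finally show "(\<Prod>j\<in>insert i S. \<phi> j (h p j)) = \<phi> i (fst p) * (\<Prod>j\<in>S. \<phi> j (snd p j))"
      by (simp add: p)
  qed
  also have "\<dots> = (\<Sum>y\<in>D. \<Sum>c\<in>{c\<in>PiE S (\<lambda>_. D). (\<Sum>j\<in>S. c j) = w - y}. \<phi> i y * (\<Prod>j\<in>S. \<phi> j (c j)))"
    unfolding B_def by (subst sum.Sigma) (auto simp: finite_PiE fin split_def)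
  also have "\<dots> = (\<Sum>y\<in>D. \<phi> i y * convolution S D \<phi> (w - y))"
    by (simp add: convolution_def sum_distrib_left)
  finally show ?thesis .
qed

lemma sum_convolution:
  assumes fin: "finite S"
  shows "(\<Sum>w\<in>UNIV. convolution S D \<phi> w) = (\<Prod>j\<in>S. \<Sum>x\<in>D. \<phi> j x)"
proof -
  have "(\<Sum>w\<in>UNIV. convolution S D \<phi> w) = (\<Sum>c\<in>PiE S (\<lambda>_. D). \<Prod>j\<in>S. \<phi> j (c j))"
    unfolding convolution_def using fin
    by (intro sum.group) (auto simp: finite_PiE)
  also have "\<dots> = (\<Prod>j\<in>S. \<Sum>x\<in>D. \<phi> j x)"
    by (rule prod_sum_PiE[symmetric]) (use fin in auto)
  finally show ?thesis .
qed

lemma sum_reflect_UNIV: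
  fixes f :: "'a::{finite,field} \<Rightarrow> int"
  shows "(\<Sum>y\<in>UNIV. f (w - y)) = (\<Sum>z\<in>UNIV. f z)"
proof -
  have b: "bij_betw (\<lambda>y. w - y) UNIV (UNIV::'a set)" by (rule bij_betwI[of _ _ _ "\<lambda>y. w - y"]) auto
  show ?thesis using sum.reindex_bij_betw[OF b, of f] by simp
qed

lemma convolution_UNIV_nonzero:
  assumes fin: "finite S" and z: "\<forall>j\<in>S. \<phi> j 0 = 0"
  shows "convolution S UNIV \<phi> w = convolution S (UNIV - {0::'a::{finite,field}}) \<phi> w"
proof -
  define A where "A = {c \<in> PiE S (\<lambda>_. UNIV::'a set). sum c S = w}"
  define B where "B = {c \<in> PiE S (\<lambda>_. UNIV - {0::'a}). sum c S = w}"
  have "(\<Sum>c\<in>A. \<Prod>j\<in>S. \<phi> j (c j)) = (\<Sum>c\<in>B. \<Prod>j\<in>S. \<phi> j (c j))"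
  proof (rule sum.mono_neutral_right)
    show "finite A" using fin by (auto simp: A_def finite_PiE)
    show "B \<subseteq> A" by (auto simp: A_def B_def PiE_def Pi_def)
    show "\<forall>c\<in>A - B. (\<Prod>j\<in>S. \<phi> j (c j)) = 0"
    proof
      fix c assume c: "c \<in> A - B"
      then obtain j where "j \<in> S" "c j = 0" by (auto simp: A_def B_def PiE_def Pi_def)
      then have "\<phi> j (c j) = 0" using z by simp
      then show "(\<Prod>j\<in>S. \<phi> j (c j)) = 0" using fin \<open>j \<in> S\<close> by (intro prod_zero) auto
    qed
  qed
  then show ?thesis by (simp add: convolution_def A_def B_def)
qed

text \<open>\<open>q\<close> times the convolution over \<open>\<bbbF>\<^sub>q\<^sup>*\<close> of \<open>v\<close> copies of \<open>\<eta>\<close> and \<open>r\<close> copies of the trivial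
  character, evaluated at \<open>w\<close>.\<close>

definition conv_formula :: "nat \<Rightarrow> nat \<Rightarrow> 'a::{finite,field} \<Rightarrow> int" where
  "conv_formula v r w = (let Q = int (CARD('a)); e = quad_char (-1::'a) in
     if v = 0 then (Q - 1) ^ r - (-1) ^ r + Q * (-1) ^ r * (if w = 0 then 1 else 0)
     else if odd v then (-1) ^ r * e ^ ((v - 1) div 2) * Q ^ ((v + 1) div 2) * quad_char w
     else (-1) ^ r * e ^ (v div 2) * Q ^ (v div 2) * (Q * (if w = 0 then 1 else 0) - 1))"

context field_generator
begin

lemma card_nonzero_int: "int (card (UNIV - {0::'a})) = int (CARD('a)) - 1"
  using card_nonzero card_ge_2[where 'a='a] by (simp add: of_nat_diff)

lemma sum_nonzero_affine: "(\<Sum>y\<in>UNIV - {0::'a}. A + B * f y) = (int (CARD('a)) - 1) * A + B * (\<Sum>y\<in>UNIV - {0::'a}. f y)"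
  for A B :: int
proof -
  have "(\<Sum>y\<in>UNIV - {0::'a}. A + B * f y) = (\<Sum>y\<in>UNIV - {0::'a}. A) + B * (\<Sum>y\<in>UNIV - {0::'a}. f y)"
    by (simp add: sum.distrib sum_distrib_left)
  also have "(\<Sum>y\<in>UNIV - {0::'a}. A) = int (card (UNIV - {0::'a})) * A" by (rule sum_constant)
  finally show ?thesis by (simp only: card_nonzero_int)
qed

lemma sum_nonzero_indicator: "(\<Sum>y\<in>UNIV - {0::'a}. (if w = y then 1 else 0::int)) = (if w = 0 then 0 else 1)"
proof (cases "w = 0")
  case True then show ?thesis by (intro trans[OF sum.neutral]) auto
next
  case False
  have "(\<Sum>y\<in>UNIV - {0::'a}. (if w = y then 1 else 0::int)) = (\<Sum>y\<in>{w}. 1)"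
    using False by (intro sum.mono_neutral_cong_right) auto
  then show ?thesis using False by simp
qed

lemma sum_nonzero_quad_char_diff: "even (CARD('a) - 1) \<Longrightarrow> (\<Sum>y\<in>UNIV - {0::'a}. quad_char (w - y)) = - quad_char w"
  using sum_quad_char_shift[of w] sum_UNIV_nonzero[of "\<lambda>y. quad_char (w - y)"] by simp

lemma sum_nonzero_quad_char_indicator: "(\<Sum>y\<in>UNIV - {0::'a}. quad_char y * (if w = y then 1 else 0)) = quad_char w"
proof (cases "w = 0")
  case True then show ?thesis by simp
next
  case False
  have "(\<Sum>y\<in>UNIV - {0::'a}. quad_char y * (if w = y then 1 else 0)) = (\<Sum>y\<in>{w}. quad_char y)"
    using False by (intro sum.mono_neutral_cong_right) auto
  then show ?thesis by simp
qed

lemma sum_nonzero_quad_char: "even (CARD('a) - 1) \<Longrightarrow> (\<Sum>y\<in>UNIV - {0::'a}. quad_char y) = 0"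
  using sum_quad_char sum_UNIV_nonzero[of quad_char] by simp

lemma sum_nonzero_quad_char_jacobi: "even (CARD('a) - 1) \<Longrightarrow> (\<Sum>y\<in>UNIV - {0::'a}. quad_char y * quad_char (w - y))
   = quad_char (-1::'a) * (int (CARD('a)) * (if w = 0 then 1 else 0) - 1)"
  using sum_quad_char_jacobi[of w] sum_UNIV_nonzero[of "\<lambda>y. quad_char y * quad_char (w - y)"] by (simp split: if_splits)

lemma sum_nonzero_conv_formula:
  assumes "v = 0 \<or> even (CARD('a) - 1)"
  shows "(\<Sum>y\<in>UNIV - {0::'a}. conv_formula v r (w - y)) = conv_formula v (Suc r) w"
proof -
  define Q where "Q = int (CARD('a))"
  define e where "e = quad_char (-1::'a)"
  show ?thesis
  proof (cases "v = 0")
    case True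
    have "(\<Sum>y\<in>UNIV - {0::'a}. conv_formula v r (w - y))
      = (\<Sum>y\<in>UNIV - {0::'a}. ((Q - 1) ^ r - (-1) ^ r) + (Q * (-1) ^ r) * (if w = y then 1 else 0))"
      using True by (simp add: conv_formula_def Q_def Let_def)
    also have "\<dots> = (Q - 1) * ((Q - 1) ^ r - (-1) ^ r) + (Q * (-1) ^ r) * (if w = 0 then 0 else 1)"
      unfolding sum_nonzero_affine sum_nonzero_indicator Q_def by simp
    also have "\<dots> = conv_formula v (Suc r) w"
      using True by (cases "w = 0") (auto simp: conv_formula_def Q_def Let_def algebra_simps)
    finally show ?thesis .
  next
    case False
    then have ev: "even (CARD('a) - 1)" using assms by simp
    show ?thesis
    proof (cases "odd v")
      case True
      have "(\<Sum>y\<in>UNIV - {0::'a}. conv_formula v r (w - y))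
        = (\<Sum>y\<in>UNIV - {0::'a}. ((-1) ^ r * e ^ ((v - 1) div 2) * Q ^ ((v + 1) div 2)) * quad_char (w - y))"
        using True False by (simp add: conv_formula_def Q_def e_def Let_def)
      also have "\<dots> = ((-1) ^ r * e ^ ((v - 1) div 2) * Q ^ ((v + 1) div 2)) * (- quad_char w)"
        by (simp add: sum_distrib_left[symmetric] sum_nonzero_quad_char_diff[OF ev])
      also have "\<dots> = conv_formula v (Suc r) w"
        using True False by (simp add: conv_formula_def Q_def e_def Let_def)
      finally show ?thesis .
    next
      case odd: False
      have "(\<Sum>y\<in>UNIV - {0::'a}. conv_formula v r (w - y))
        = (\<Sum>y\<in>UNIV - {0::'a}. (- ((-1) ^ r * e ^ (v div 2) * Q ^ (v div 2))) + ((-1) ^ r * e ^ (v div 2) * Q ^ (v div 2) * Q) * (if w = y then 1 else 0))"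
        using odd False by (intro sum.cong refl) (simp add: conv_formula_def Q_def e_def Let_def algebra_simps)
      also have "\<dots> = (Q - 1) * (- ((-1) ^ r * e ^ (v div 2) * Q ^ (v div 2))) + ((-1) ^ r * e ^ (v div 2) * Q ^ (v div 2) * Q) * (if w = 0 then 0 else 1)"
        unfolding sum_nonzero_affine sum_nonzero_indicator Q_def by simp
      also have "\<dots> = conv_formula v (Suc r) w"
        using odd False by (cases "w = 0") (auto simp: conv_formula_def Q_def e_def Let_def algebra_simps)
      finally show ?thesis .
    qed
  qed
qed

lemma sum_nonzero_quad_char_conv_formula:
  assumes ev: "even (CARD('a) - 1)"
  shows "(\<Sum>y\<in>UNIV - {0::'a}. quad_char y * conv_formula v r (w - y)) = conv_formula (Suc v) r w"
proof -
  define Q where "Q = int (CARD('a))"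
  define e where "e = quad_char (-1::'a)"
  show ?thesis
  proof (cases "v = 0")
    case True
    have "(\<Sum>y\<in>UNIV - {0::'a}. quad_char y * conv_formula v r (w - y))
      = (\<Sum>y\<in>UNIV - {0::'a}. ((Q - 1) ^ r - (-1) ^ r) * quad_char y + (Q * (-1) ^ r) * (quad_char y * (if w = y then 1 else 0)))"
      using True by (intro sum.cong refl) (simp add: conv_formula_def Q_def Let_def algebra_simps)
    also have "\<dots> = ((Q - 1) ^ r - (-1) ^ r) * (\<Sum>y\<in>UNIV - {0::'a}. quad_char y) + (Q * (-1) ^ r) * quad_char w"
      by (simp add: sum.distrib sum_distrib_left[symmetric] sum_nonzero_quad_char_indicator)
    also have "\<dots> = conv_formula (Suc v) r w"
      using True by (simp add: sum_nonzero_quad_char[OF ev] conv_formula_def Q_def Let_def algebra_simps)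
    finally show ?thesis .
  next
    case False
    show ?thesis
    proof (cases "odd v")
      case True
      then obtain k where k: "v = 2 * k + 1" by (elim oddE)
      have "(\<Sum>y\<in>UNIV - {0::'a}. quad_char y * conv_formula v r (w - y))
        = (\<Sum>y\<in>UNIV - {0::'a}. ((-1) ^ r * e ^ k * Q ^ (k + 1)) * (quad_char y * quad_char (w - y)))"
        using k by (intro sum.cong refl) (simp add: conv_formula_def Q_def e_def Let_def algebra_simps)
      also have "\<dots> = ((-1) ^ r * e ^ k * Q ^ (k + 1)) * (e * (Q * (if w = 0 then 1 else 0) - 1))"
        by (simp add: sum_distrib_left[symmetric] sum_nonzero_quad_char_jacobi[OF ev] e_def Q_def)
      also have "\<dots> = conv_formula (Suc v) r w"
        using k by (simp add: conv_formula_def Q_def e_def Let_def algebra_simps)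
      finally show ?thesis .
    next
      case odd: False
      then have "even v" by simp
      then obtain k where k: "v = 2 * k" by (elim evenE)
      have k0: "k > 0" using k False by simp
      have "(\<Sum>y\<in>UNIV - {0::'a}. quad_char y * conv_formula v r (w - y))
        = (\<Sum>y\<in>UNIV - {0::'a}. (- ((-1) ^ r * e ^ k * Q ^ k)) * quad_char y + ((-1) ^ r * e ^ k * Q ^ k * Q) * (quad_char y * (if w = y then 1 else 0)))"
        using k k0 by (intro sum.cong refl) (simp add: conv_formula_def Q_def e_def Let_def algebra_simps)
      also have "\<dots> = (- ((-1) ^ r * e ^ k * Q ^ k)) * (\<Sum>y\<in>UNIV - {0::'a}. quad_char y) + ((-1) ^ r * e ^ k * Q ^ k * Q) * quad_char w"
        by (simp only: sum.distrib sum_distrib_left[symmetric] sum_nonzero_quad_char_indicator)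
      also have "\<dots> = conv_formula (Suc v) r w"
        using k k0 by (simp add: sum_nonzero_quad_char[OF ev] conv_formula_def Q_def e_def Let_def algebra_simps)
      finally show ?thesis .
    qed
  qed
qed

lemma convolution_nonzero_eq_conv_formula:
  assumes fin: "finite S" and ev: "V \<inter> S = {} \<or> even (CARD('a) - 1)"
  shows "int (CARD('a)) * convolution S (UNIV - {0::'a}) (\<lambda>j. if j \<in> V then quad_char else (\<lambda>_. 1)) w
       = conv_formula (card (S \<inter> V)) (card (S - V)) w"
  using fin ev
proof (induction S arbitrary: w rule: finite_induct)
  case empty
  then show ?case by (simp add: convolution_empty conv_formula_def)
next
  case (insert i S)
  define \<phi> where "\<phi> = (\<lambda>j. if j \<in> V then quad_char else (\<lambda>_::'a. 1::int))"
  have IH: "int (CARD('a)) * convolution S (UNIV - {0}) \<phi> w' = conv_formula (card (S \<inter> V)) (card (S - V)) w'" for w'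
    using insert by (auto simp: \<phi>_def)
  have "int (CARD('a)) * convolution (insert i S) (UNIV - {0}) \<phi> w
      = (\<Sum>y\<in>UNIV - {0}. \<phi> i y * conv_formula (card (S \<inter> V)) (card (S - V)) (w - y))"
    by (simp add: convolution_insert[OF insert(1,2)] sum_distrib_left IH[symmetric] algebra_simps)
  also have "\<dots> = conv_formula (card (insert i S \<inter> V)) (card (insert i S - V)) w"
  proof (cases "i \<in> V")
    case True
    have ev: "even (CARD('a) - 1)" using insert(4) True by auto
    have c: "card (insert i S \<inter> V) = Suc (card (S \<inter> V))" "insert i S - V = S - V"
      using True insert(1,2) by auto
    show ?thesis unfolding c using sum_nonzero_quad_char_conv_formula[OF ev] True by (simp add: \<phi>_def)
  next
    case False
    have c: "insert i S \<inter> V = S \<inter> V" "card (insert i S - V) = Suc (card (S - V))"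
      using False insert(1,2) by (auto simp: insert_Diff_if)
    have h: "card (S \<inter> V) = 0 \<or> even (CARD('a) - 1)" using insert(1,4) by auto
    show ?thesis unfolding c using sum_nonzero_conv_formula[OF h] False by (simp add: \<phi>_def)
  qed
  finally show ?case by (simp add: \<phi>_def)
qed

lemma conv_formula_0: "conv_formula 0 r (0::'a) = (int (CARD('a)) - 1) ^ r - (-1) ^ r + int (CARD('a)) * (-1) ^ r"
  by (simp add: conv_formula_def Let_def)

lemma conv_formula_even: "0 < v \<Longrightarrow> even v \<Longrightarrow> conv_formula v r (0::'a) = (-1) ^ r * quad_char (-1::'a) ^ (v div 2) * int (CARD('a)) ^ (v div 2) * (int (CARD('a)) - 1)"
  by (simp add: conv_formula_def Let_def)

lemma convolution_nonzero_subset: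
  assumes fin: "finite I" and V: "V \<subseteq> I" and ev: "V = {} \<or> even (CARD('a) - 1)"
  shows "int CARD('a) * convolution I (UNIV - {0::'a}) (\<lambda>j. if j \<in> V then quad_char else (\<lambda>_. 1)) 0
       = conv_formula (card V) (card I - card V) (0::'a)"
proof -
  have "I \<inter> V = V" using V by auto
  moreover have "card (I - V) = card I - card V" using V fin by (simp add: card_Diff_subset finite_subset)
  moreover have "V \<inter> I = {} \<or> even (CARD('a) - 1)" using ev V by auto
  ultimately show ?thesis using convolution_nonzero_eq_conv_formula[OF fin, of V 0] by simp
qed

lemma convolution_UNIV_free_coordinate:
  fixes w :: 'a
  assumes finI: "finite I" and i: "i \<in> I" "i \<notin> V"
  shows "convolution I UNIV (\<lambda>j. if j \<in> V then quad_char else (\<lambda>_. 1)) w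
       = (\<Prod>j\<in>I - {i}. \<Sum>x\<in>(UNIV::'a set). (if j \<in> V then quad_char else (\<lambda>_. 1)) x)"
proof -
  have I: "I = insert i (I - {i})" using i by auto
  have "convolution I UNIV (\<lambda>j. if j \<in> V then quad_char else (\<lambda>_. 1)) w
      = (\<Sum>y\<in>(UNIV::'a set). convolution (I - {i}) UNIV (\<lambda>j. if j \<in> V then quad_char else (\<lambda>_. 1)) (w - y))"
    using convolution_insert[of "I - {i}" i UNIV "\<lambda>j. if j \<in> V then quad_char else (\<lambda>_. 1)" w] finI i
    by (simp add: insert_absorb[OF i(1)])
  also have "\<dots> = (\<Sum>z\<in>(UNIV::'a set). convolution (I - {i}) UNIV (\<lambda>j. if j \<in> V then quad_char else (\<lambda>_. 1)) z)"
    by (rule sum_reflect_UNIV)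
  also have "\<dots> = (\<Prod>j\<in>I - {i}. \<Sum>x\<in>(UNIV::'a set). (if j \<in> V then quad_char else (\<lambda>_. 1)) x)"
    using finI by (simp add: sum_convolution)
  finally show ?thesis .
qed

lemma convolution_UNIV_trivial:
  assumes finI: "finite I" and ne: "I \<noteq> {}"
  shows "convolution I UNIV (\<lambda>j. if j \<in> {} then quad_char else (\<lambda>_. 1)) (0::'a) = int (CARD('a)) ^ (card I - 1)"
proof -
  obtain i where i: "i \<in> I" using ne by blast
  have "convolution I UNIV (\<lambda>j. if j \<in> {} then quad_char else (\<lambda>_. 1)) (0::'a) = (\<Prod>j\<in>I - {i}. int (CARD('a)))"
    using convolution_UNIV_free_coordinate[OF finI i, of "{}" 0] by simp
  then show ?thesis using finI i by (simp add: card_Diff_singleton)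
qed

lemma convolution_UNIV_vanishes:
  assumes finI: "finite I" and ev: "even (CARD('a) - 1)"
    and V: "V \<subseteq> I" "V \<noteq> {}" "V \<noteq> I"
  shows "convolution I UNIV (\<lambda>j. if j \<in> V then quad_char else (\<lambda>_. 1)) (0::'a) = 0"
proof -
  obtain i where i: "i \<in> I" "i \<notin> V" using V by blast
  obtain j where j: "j \<in> V" using V by blast
  have "(\<Prod>j\<in>I - {i}. \<Sum>x\<in>(UNIV::'a set). (if j \<in> V then quad_char else (\<lambda>_. 1)) x) = 0"
  proof (rule prod_zero)
    show "finite (I - {i})" using finI by simp
    show "\<exists>j\<in>I - {i}. (\<Sum>x\<in>(UNIV::'a set). (if j \<in> V then quad_char else (\<lambda>_. 1)) x) = 0"
      using j i V sum_quad_char[OF ev] by (intro bexI[of _ j]) auto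
  qed
  then show ?thesis using convolution_UNIV_free_coordinate[OF finI i, of 0] by simp
qed

end

section \<open>Zeros of diagonal forms\<close>

lemma card_sum_eq_fibres:
  fixes \<psi> :: "nat \<Rightarrow> 'a::{finite,field} \<Rightarrow> 'a"
  assumes fin: "finite I" and maps: "\<forall>j\<in>I. \<forall>x\<in>D. \<psi> j x \<in> C"
  shows "card {x\<in>PiE I (\<lambda>_. D). (\<Sum>j\<in>I. \<psi> j (x j)) = w}
       = (\<Sum>c\<in>{c\<in>PiE I (\<lambda>_. C). (\<Sum>j\<in>I. c j) = w}. \<Prod>j\<in>I. card {x\<in>D. \<psi> j x = c j})"
proof -
  define A where "A = {x\<in>PiE I (\<lambda>_. D). (\<Sum>j\<in>I. \<psi> j (x j)) = w}"
  define T where "T = {c\<in>PiE I (\<lambda>_. C). (\<Sum>j\<in>I. c j) = w}"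
  define h where "h = (\<lambda>x. restrict (\<lambda>j. \<psi> j (x j)) I)"
  have hA: "h ` A \<subseteq> T" unfolding h_def using maps by (auto simp: A_def T_def PiE_def Pi_def)
  have "card A = (\<Sum>x\<in>A. 1)" by simp
  also have "\<dots> = (\<Sum>c\<in>T. \<Sum>x\<in>{x\<in>A. h x = c}. 1)"
  proof -
    have finA: "finite A" and finT: "finite T" using fin by (auto simp: A_def T_def finite_PiE)
    show ?thesis using sum.group[OF finA finT hA, of "\<lambda>_. 1::nat"] by simp
  qed
  also have "\<dots> = (\<Sum>c\<in>T. \<Prod>j\<in>I. card {x\<in>D. \<psi> j x = c j})"
  proof (rule sum.cong[OF refl])
    fix c assume c: "c \<in> T"
    have "{x\<in>A. h x = c} = PiE I (\<lambda>j. {x\<in>D. \<psi> j x = c j})"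
    proof (intro equalityI subsetI)
      fix x assume "x \<in> {x\<in>A. h x = c}"
      then have x: "x \<in> PiE I (\<lambda>_. D)" "h x = c" by (auto simp: A_def)
      have "\<psi> j (x j) = c j" if "j \<in> I" for j using x(2) that by (auto simp: h_def dest: fun_cong[of _ _ j])
      then show "x \<in> PiE I (\<lambda>j. {x\<in>D. \<psi> j x = c j})" using x(1) by (auto simp: PiE_def Pi_def)
    next
      fix x assume x: "x \<in> PiE I (\<lambda>j. {x\<in>D. \<psi> j x = c j})"
      have hx: "h x = c"
      proof
        fix j show "h x j = c j"
          using x c by (cases "j \<in> I") (auto simp: h_def T_def PiE_def extensional_def)
      qed
      have "(\<Sum>j\<in>I. \<psi> j (x j)) = (\<Sum>j\<in>I. c j)" using x by (intro sum.cong) auto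
      then show "x \<in> {x\<in>A. h x = c}" using x hx c by (auto simp: A_def T_def PiE_def Pi_def)
    qed
    then show "(\<Sum>x\<in>{x\<in>A. h x = c}. 1) = (\<Prod>j\<in>I. card {x\<in>D. \<psi> j x = c j})"
      using fin by (simp add: card_PiE)
  qed
  finally show ?thesis by (simp add: A_def T_def)
qed

context field_generator
begin

lemma sum_scaling_average:
  fixes F :: "(nat \<Rightarrow> 'a) \<Rightarrow> int" and I :: "nat set"
  assumes D: "D = UNIV \<or> D = UNIV - {0::'a}"
  defines "C \<equiv> {c\<in>PiE I (\<lambda>_. D). (\<Sum>j\<in>I. c j) = 0}"
  shows "int (CARD('a) - 1) * (\<Sum>c\<in>C. F c) = (\<Sum>c\<in>C. \<Sum>s<CARD('a) - 1. F (restrict (\<lambda>j. g ^ s * c j) I))"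
proof -
  have inv: "(\<Sum>c\<in>C. F (restrict (\<lambda>j. l * c j) I)) = (\<Sum>c\<in>C. F c)" if l: "l \<noteq> 0" for l :: 'a
  proof -
    have b: "bij_betw (\<lambda>c. restrict (\<lambda>j. l * c j) I) C C"
    proof (rule bij_betwI[of _ _ _ "\<lambda>c. restrict (\<lambda>j. c j / l) I"])
      show "(\<lambda>c. restrict (\<lambda>j. l * c j) I) \<in> C \<rightarrow> C"
        using l D by (auto simp: C_def PiE_def Pi_def sum_distrib_left[symmetric])
      show "(\<lambda>c. restrict (\<lambda>j. c j / l) I) \<in> C \<rightarrow> C"
        using l D by (auto simp: C_def PiE_def Pi_def sum_divide_distrib[symmetric])
      show "restrict (\<lambda>j. restrict (\<lambda>j. l * c j) I j / l) I = c" if "c \<in> C" for c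
        using that l by (auto simp: C_def PiE_def extensional_def fun_eq_iff)
      show "restrict (\<lambda>j. l * restrict (\<lambda>j. c j / l) I j) I = c" if "c \<in> C" for c
        using that l by (auto simp: C_def PiE_def extensional_def fun_eq_iff)
    qed
    show ?thesis using sum.reindex_bij_betw[OF b, of F] by simp
  qed
  have "(\<Sum>c\<in>C. \<Sum>s<CARD('a) - 1. F (restrict (\<lambda>j. g ^ s * c j) I))
      = (\<Sum>s<CARD('a) - 1. \<Sum>c\<in>C. F (restrict (\<lambda>j. g ^ s * c j) I))"
    by (rule sum.swap)
  also have "\<dots> = (\<Sum>s<CARD('a) - 1. \<Sum>c\<in>C. F c)"
    using inv generator_nonzero by simp
  finally show ?thesis by simp
qed

(* dlog a + d * dlog c - dlog c is a representative of dlog a - dlog c modulo d that avoids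
   truncated subtraction. *)

lemma card_binomial_scaled_solutions:
  fixes a c :: 'a and m :: nat
  assumes a: "a \<noteq> 0" and c: "c \<noteq> 0" and m: "0 < m"
  defines "d \<equiv> gcd m (CARD('a) - 1)"
  shows "card {x. a * x ^ m = g ^ s * c} = (if [s = dlog a + d * dlog c - dlog c] (mod d) then d else 0)"
proof -
  have y: "g ^ s * c \<noteq> 0" using c generator_nonzero by simp
  have "[dlog (g ^ s * c) = s + dlog c] (mod d)"
  proof -
    have "g ^ (s + dlog c) = g ^ s * c" using generator_power_dlog[OF c] by (simp add: power_add)
    then have "[s + dlog c = dlog (g ^ s * c)] (mod CARD('a) - 1)" using cong_dlog[OF y] by simp
    then show ?thesis using cong_dvd_modulus_nat cong_sym by (metis d_def gcd_dvd2)
  qed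
  then have "[dlog a = dlog (g ^ s * c)] (mod d) \<longleftrightarrow> [dlog a = s + dlog c] (mod d)"
    using cong_trans cong_sym by blast
  also have "\<dots> \<longleftrightarrow> [s + dlog c = dlog a + d * dlog c] (mod d)"
  proof -
    have "[dlog a + d * dlog c = dlog a] (mod d)" by (simp add: cong_def)
    then show ?thesis by (meson cong_sym cong_trans)
  qed
  also have "dlog a + d * dlog c = (dlog a + d * dlog c - dlog c) + dlog c"
  proof -
    have "0 < d" using m by (simp add: d_def)
    then have "dlog c \<le> d * dlog c" by simp
    then show ?thesis by linarith
  qed
  finally show ?thesis
    using card_binomial_solutions[OF a y m] by (simp add: d_def cong_add_rcancel_nat)
qed

lemma neg_one_power_dlog_diff:
  fixes a c :: 'a and d :: nat
  assumes ev: "even (CARD('a) - 1)" and a: "a \<noteq> 0" and c: "c \<noteq> 0" and d: "0 < d" "even d"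
  shows "(-1::int) ^ (dlog a + d * dlog c - dlog c) = quad_char a * quad_char c"
proof -
  have "dlog c \<le> d * dlog c" using d by simp
  then have "dlog a + d * dlog c - dlog c + dlog c = dlog a + d * dlog c" by linarith
  then have "even (dlog a + d * dlog c - dlog c) \<longleftrightarrow> (even (dlog a) \<longleftrightarrow> even (dlog c))"
    using d by (metis even_add even_mult_iff)
  then show ?thesis using quad_char_dlog[OF ev a] quad_char_dlog[OF ev c]
    by (cases "even (dlog a)"; cases "even (dlog c)") auto
qed

lemma sum_scaled_fibre_products:
  fixes a :: "nat \<Rightarrow> 'a" and m :: "nat \<Rightarrow> nat" and c :: "nat \<Rightarrow> 'a"
  assumes finI: "finite I" and a_nz: "\<forall>j\<in>I. a j \<noteq> 0" and m_pos: "\<forall>j\<in>I. 0 < m j"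
    and cop: "\<forall>i\<in>I. \<forall>j\<in>I. i \<noteq> j \<longrightarrow> coprime (halve_even (gcd (m i) (CARD('a) - 1))) (halve_even (gcd (m j) (CARD('a) - 1)))"
  shows "(\<Sum>s<CARD('a) - 1. \<Prod>j\<in>I. int (card {x. a j * x ^ m j = g ^ s * c j}))
       = int (CARD('a) - 1) * (\<Sum>V\<in>{V. V \<subseteq> {j\<in>I. even (gcd (m j) (CARD('a) - 1))} \<and> even (card V)}.
            \<Prod>j\<in>V. quad_char (a j) * quad_char (c j))"
proof -
  define N where "N = CARD('a) - 1"
  define d where "d j = gcd (m j) N" for j
  define S where "S = {j\<in>I. c j \<noteq> 0}"
  define u where "u j = dlog (a j) + d j * dlog (c j) - dlog (c j)" for j
  have N: "0 < N" using card_units_pos[where 'a='a] by (simp add: N_def)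
  have SI: "S \<subseteq> I" and finS: "finite S" using finI by (auto simp: S_def)
  have dpos: "\<forall>j\<in>S. 0 < d j \<and> d j dvd N" using N by (auto simp: d_def)
  have key: "card {x. a j * x ^ m j = g ^ s * c j} = (if [s = u j] (mod d j) then d j else 0)"
    if "j \<in> S" for j s
    using that a_nz m_pos card_binomial_scaled_solutions by (auto simp: S_def u_def d_def N_def)
  have "(\<Sum>s<N. \<Prod>j\<in>I. int (card {x. a j * x ^ m j = g ^ s * c j}))
      = (\<Sum>s<N. \<Prod>j\<in>S. (if [s = u j] (mod d j) then int (d j) else 0))"
  proof (rule sum.cong[OF refl])
    fix s
    have "(\<Prod>j\<in>I. int (card {x. a j * x ^ m j = g ^ s * c j})) = (\<Prod>j\<in>S. int (card {x. a j * x ^ m j = g ^ s * c j}))"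
    proof (rule prod.mono_neutral_right[OF finI SI])
      show "\<forall>j\<in>I - S. int (card {x. a j * x ^ m j = g ^ s * c j}) = 1"
        using card_binomial_zero a_nz m_pos by (auto simp: S_def)
    qed
    also have "\<dots> = (\<Prod>j\<in>S. (if [s = u j] (mod d j) then int (d j) else 0))"
      by (rule prod.cong[OF refl]) (simp add: key)
    finally show "(\<Prod>j\<in>I. int (card {x. a j * x ^ m j = g ^ s * c j})) = (\<Prod>j\<in>S. (if [s = u j] (mod d j) then int (d j) else 0))" .
  qed
  also have "\<dots> = int N * (\<Sum>V\<in>{V. V \<subseteq> {j\<in>S. even (d j)} \<and> even (card V)}. \<Prod>j\<in>V. (-1::int)^(u j))"
    using cop SI by (intro sum_prod_cong_indicator_halved_moduli[OF finS dpos]) (auto simp: d_def N_def)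
  also have "(\<Sum>V\<in>{V. V \<subseteq> {j\<in>S. even (d j)} \<and> even (card V)}. \<Prod>j\<in>V. (-1::int)^(u j))
      = (\<Sum>V\<in>{V. V \<subseteq> {j\<in>I. even (d j)} \<and> even (card V)}. \<Prod>j\<in>V. quad_char (a j) * quad_char (c j))"
  proof (rule sum.mono_neutral_cong_left)
    show "finite {V. V \<subseteq> {j\<in>I. even (d j)} \<and> even (card V)}" using finI by simp
    show "{V. V \<subseteq> {j\<in>S. even (d j)} \<and> even (card V)} \<subseteq> {V. V \<subseteq> {j\<in>I. even (d j)} \<and> even (card V)}"
      using SI by auto
    show "\<forall>V\<in>{V. V \<subseteq> {j\<in>I. even (d j)} \<and> even (card V)} - {V. V \<subseteq> {j\<in>S. even (d j)} \<and> even (card V)}.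
            (\<Prod>j\<in>V. quad_char (a j) * quad_char (c j)) = 0"
    proof
      fix V assume V: "V \<in> {V. V \<subseteq> {j\<in>I. even (d j)} \<and> even (card V)} - {V. V \<subseteq> {j\<in>S. even (d j)} \<and> even (card V)}"
      then obtain j where "j \<in> V" "c j = 0" by (auto simp: S_def)
      moreover have "finite V" using V finI by (auto intro: finite_subset)
      ultimately show "(\<Prod>j\<in>V. quad_char (a j) * quad_char (c j)) = 0"
        by (intro prod_zero) (auto intro!: bexI[of _ j])
    qed
    fix V assume V: "V \<in> {V. V \<subseteq> {j\<in>S. even (d j)} \<and> even (card V)}"
    show "(\<Prod>j\<in>V. (-1::int)^(u j)) = (\<Prod>j\<in>V. quad_char (a j) * quad_char (c j))"
    proof (rule prod.cong[OF refl])
      fix j assume "j \<in> V"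
      then have j: "j \<in> S" "even (d j)" using V by auto
      then have "even (CARD('a) - 1)" by (metis d_def N_def dvd_trans gcd_dvd2)
      then show "(-1::int) ^ u j = quad_char (a j) * quad_char (c j)"
        using neg_one_power_dlog_diff j dpos a_nz SI by (auto simp: S_def u_def)
    qed
  qed
  finally show ?thesis by (simp add: N_def d_def)
qed

lemma card_diagonal_zeros_char_sum:
  fixes a :: "nat \<Rightarrow> 'a" and m :: "nat \<Rightarrow> nat"
  assumes finI: "finite I" and a_nz: "\<forall>j\<in>I. a j \<noteq> 0" and m_pos: "\<forall>j\<in>I. 0 < m j"
    and cop: "\<forall>i\<in>I. \<forall>j\<in>I. i \<noteq> j \<longrightarrow> coprime (halve_even (gcd (m i) (CARD('a) - 1))) (halve_even (gcd (m j) (CARD('a) - 1)))"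
    and D: "D = UNIV \<or> D = UNIV - {0::'a}"
  shows "int (card {x\<in>PiE I (\<lambda>_. D). (\<Sum>j\<in>I. a j * x j ^ m j) = 0})
       = (\<Sum>V\<in>{V. V \<subseteq> {j\<in>I. even (gcd (m j) (CARD('a) - 1))} \<and> even (card V)}.
            (\<Prod>j\<in>V. quad_char (a j)) * convolution I D (\<lambda>j. if j \<in> V then quad_char else (\<lambda>_. 1)) 0)"
proof -
  define N where "N = CARD('a) - 1"
  define C where "C = {c\<in>PiE I (\<lambda>_. D). (\<Sum>j\<in>I. c j) = 0}"
  define Vs where "Vs = {V. V \<subseteq> {j\<in>I. even (gcd (m j) N)} \<and> even (card V)}"
  define F where "F c = (\<Prod>j\<in>I. int (card {x. a j * x ^ m j = c j}))" for c :: "nat \<Rightarrow> 'a"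
  define W where "W c = (\<Sum>V\<in>Vs. \<Prod>j\<in>V. quad_char (a j) * quad_char (c j))" for c :: "nat \<Rightarrow> 'a"
  have maps: "\<forall>j\<in>I. \<forall>x\<in>D. a j * x ^ m j \<in> D" using a_nz D by auto
  have "card {x\<in>PiE I (\<lambda>_. D). (\<Sum>j\<in>I. a j * x j ^ m j) = 0}
      = (\<Sum>c\<in>C. \<Prod>j\<in>I. card {x\<in>D. a j * x ^ m j = c j})"
    unfolding C_def by (rule card_sum_eq_fibres[OF finI maps])
  also have "\<dots> = (\<Sum>c\<in>C. \<Prod>j\<in>I. card {x. a j * x ^ m j = c j})"
  proof (rule sum.cong[OF refl], rule prod.cong[OF refl])
    fix c j assume c: "c \<in> C" and j: "j \<in> I"
    show "card {x\<in>D. a j * x ^ m j = c j} = card {x. a j * x ^ m j = c j}"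
    proof (cases "D = UNIV")
      case True then show ?thesis by simp
    next
      case False
      then have "D = UNIV - {0}" using D by simp
      moreover have "c j \<noteq> 0" using c j calculation by (auto simp: C_def)
      moreover have "0 < m j" using m_pos j by simp
      ultimately have "{x\<in>D. a j * x ^ m j = c j} = {x. a j * x ^ m j = c j}" by (auto simp: power_0_left)
      then show ?thesis by simp
    qed
  qed
  finally have c1: "int (card {x\<in>PiE I (\<lambda>_. D). (\<Sum>j\<in>I. a j * x j ^ m j) = 0}) = (\<Sum>c\<in>C. F c)"
    by (simp add: F_def)
  have "int N * (\<Sum>c\<in>C. F c) = (\<Sum>c\<in>C. \<Sum>s<N. F (restrict (\<lambda>j. g ^ s * c j) I))"
    unfolding C_def N_def by (rule sum_scaling_average[OF D])
  also have "\<dots> = (\<Sum>c\<in>C. int N * W c)"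
  proof (rule sum.cong[OF refl])
    fix c assume "c \<in> C"
    have "(\<Sum>s<N. F (restrict (\<lambda>j. g ^ s * c j) I)) = (\<Sum>s<N. \<Prod>j\<in>I. int (card {x. a j * x ^ m j = g ^ s * c j}))"
      by (simp add: F_def)
    also have "\<dots> = int N * W c"
      unfolding N_def W_def Vs_def by (rule sum_scaled_fibre_products[OF finI a_nz m_pos cop])
    finally show "(\<Sum>s<N. F (restrict (\<lambda>j. g ^ s * c j) I)) = int N * W c" .
  qed
  finally have "int N * (\<Sum>c\<in>C. F c) = int N * (\<Sum>c\<in>C. W c)" by (simp add: sum_distrib_left)
  then have c2: "(\<Sum>c\<in>C. F c) = (\<Sum>c\<in>C. W c)" using card_units_pos[where 'a='a] by (simp add: N_def)
  have "(\<Sum>c\<in>C. W c) = (\<Sum>V\<in>Vs. \<Sum>c\<in>C. \<Prod>j\<in>V. quad_char (a j) * quad_char (c j))"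
    unfolding W_def by (rule sum.swap)
  also have "\<dots> = (\<Sum>V\<in>Vs. (\<Prod>j\<in>V. quad_char (a j)) * convolution I D (\<lambda>j. if j \<in> V then quad_char else (\<lambda>_. 1)) 0)"
  proof (rule sum.cong[OF refl])
    fix V assume V: "V \<in> Vs"
    then have VI: "V \<subseteq> I" by (auto simp: Vs_def)
    have "(\<Sum>c\<in>C. \<Prod>j\<in>V. quad_char (a j) * quad_char (c j)) = (\<Prod>j\<in>V. quad_char (a j)) * (\<Sum>c\<in>C. \<Prod>j\<in>V. quad_char (c j))"
      by (simp add: prod.distrib sum_distrib_left)
    also have "(\<Sum>c\<in>C. \<Prod>j\<in>V. quad_char (c j)) = convolution I D (\<lambda>j. if j \<in> V then quad_char else (\<lambda>_. 1)) 0"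
      unfolding convolution_def C_def
    proof (rule sum.cong[OF refl])
      fix c
      show "(\<Prod>j\<in>V. quad_char (c j)) = (\<Prod>j\<in>I. (if j \<in> V then quad_char else (\<lambda>_. 1)) (c j))"
        by (rule prod.mono_neutral_cong_left[OF finI VI]) auto
    qed
    finally show "(\<Sum>c\<in>C. \<Prod>j\<in>V. quad_char (a j) * quad_char (c j)) = (\<Prod>j\<in>V. quad_char (a j)) * convolution I D (\<lambda>j. if j \<in> V then quad_char else (\<lambda>_. 1)) 0" .
  qed
  finally show ?thesis using c1 c2 by (simp add: Vs_def N_def)
qed

lemma even_card_units_if_even_gcd:
  "even (gcd (m :: nat) (CARD('a) - 1)) \<Longrightarrow> even (CARD('a) - 1)"
  by (metis dvd_trans gcd_dvd2)

lemma sum_even_subsets_by_size: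
  fixes a :: "nat \<Rightarrow> 'a"
  assumes finE: "finite E" and ev: "E \<noteq> {} \<Longrightarrow> even (CARD('a) - 1)"
  shows "(\<Sum>V\<in>{V. V \<subseteq> E \<and> even (card V)} - {{}}. (\<Prod>j\<in>V. quad_char (a j)) * quad_char (-1::'a) ^ (card V div 2) * int (CARD('a)) ^ (card V div 2))
       = (\<Sum>j=1..card E div 2. quad_char ((-1::'a) ^ j) * esym E (\<lambda>i. quad_char (a i)) (2 * j) * int (CARD('a)) ^ j)"
proof -
  define Rs where "Rs = {V. V \<subseteq> E \<and> even (card V)} - {{}}"
  define h where "h V = (\<Prod>j\<in>V. quad_char (a j)) * quad_char (-1::'a) ^ (card V div 2) * int (CARD('a)) ^ (card V div 2)" for V
  have finRs: "finite Rs" using finE by (simp add: Rs_def)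
  have img: "(\<lambda>V. card V div 2) ` Rs \<subseteq> {1..card E div 2}"
  proof
    fix j assume "j \<in> (\<lambda>V. card V div 2) ` Rs"
    then obtain V where V: "V \<subseteq> E" "even (card V)" "V \<noteq> {}" "j = card V div 2" by (auto simp: Rs_def)
    have "finite V" using V finE finite_subset by blast
    then have "card V > 0" using V by (simp add: card_gt_0_iff)
    then have "card V \<ge> 2" using V(2) by presburger
    moreover have "card V \<le> card E" using V finE by (simp add: card_mono)
    ultimately show "j \<in> {1..card E div 2}" using V(4) by (auto intro: div_le_mono)
  qed
  have "(\<Sum>V\<in>Rs. h V) = (\<Sum>j=1..card E div 2. \<Sum>V\<in>{V\<in>Rs. card V div 2 = j}. h V)"
    using sum.group[OF finRs _ img, of h] by simp
  also have "\<dots> = (\<Sum>j=1..card E div 2. quad_char ((-1::'a) ^ j) * esym E (\<lambda>i. quad_char (a i)) (2 * j) * int (CARD('a)) ^ j)"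
  proof (rule sum.cong[OF refl])
    fix j assume j: "j \<in> {1..card E div 2}"
    then have "E \<noteq> {}" by auto
    then have evN: "even (CARD('a) - 1)" by (rule ev)
    have set: "{V\<in>Rs. card V div 2 = j} = {V. V \<subseteq> E \<and> card V = 2 * j}"
    proof (intro equalityI subsetI)
      fix V assume "V \<in> {V\<in>Rs. card V div 2 = j}"
      then show "V \<in> {V. V \<subseteq> E \<and> card V = 2 * j}" by (auto simp: Rs_def elim!: evenE)
    next
      fix V assume V: "V \<in> {V. V \<subseteq> E \<and> card V = 2 * j}"
      then have "V \<noteq> {}" using j by auto
      then show "V \<in> {V\<in>Rs. card V div 2 = j}" using V by (auto simp: Rs_def)
    qed
    have "(\<Sum>V\<in>{V\<in>Rs. card V div 2 = j}. h V) = (\<Sum>V\<in>{V. V \<subseteq> E \<and> card V = 2 * j}. (\<Prod>i\<in>V. quad_char (a i)) * (quad_char (-1::'a) ^ j * int (CARD('a)) ^ j))"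
      unfolding set by (rule sum.cong[OF refl]) (simp add: h_def)
    also have "\<dots> = quad_char ((-1::'a) ^ j) * esym E (\<lambda>i. quad_char (a i)) (2 * j) * int (CARD('a)) ^ j"
      by (simp add: esym_def sum_distrib_left quad_char_power[OF evN] mult_ac)
    finally show "(\<Sum>V\<in>{V\<in>Rs. card V div 2 = j}. h V) = quad_char ((-1::'a) ^ j) * esym E (\<lambda>i. quad_char (a i)) (2 * j) * int (CARD('a)) ^ j" .
  qed
  finally show ?thesis by (simp add: Rs_def h_def)
qed

lemma card_diagonal_zeros_nonzero:
  fixes a :: "nat \<Rightarrow> 'a" and m :: "nat \<Rightarrow> nat"
  assumes finI: "finite I" and a_nz: "\<forall>j\<in>I. a j \<noteq> 0" and m_pos: "\<forall>j\<in>I. 0 < m j"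
    and cop: "\<forall>i\<in>I. \<forall>j\<in>I. i \<noteq> j \<longrightarrow>
      coprime (halve_even (gcd (m i) (CARD('a) - 1))) (halve_even (gcd (m j) (CARD('a) - 1)))"
  defines "E \<equiv> {j\<in>I. even (gcd (m j) (CARD('a) - 1))}" and "n \<equiv> card I" and "Q \<equiv> int CARD('a)"
  shows "Q * int (card {x\<in>PiE I (\<lambda>_. UNIV - {0}). (\<Sum>j\<in>I. a j * x j ^ m j) = 0})
       = (Q - 1) ^ n - (-1) ^ n + Q * (-1) ^ n + (-1) ^ n * (Q - 1) *
         (\<Sum>j=1..card E div 2. quad_char ((-1::'a) ^ j) * esym E (\<lambda>i. quad_char (a i)) (2 * j) * Q ^ j)"
proof -
  define \<phi> where "\<phi> V = (\<lambda>j::nat. if j \<in> V then quad_char else (\<lambda>_::'a. 1::int))" for V :: "nat set"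
  define Vs where "Vs = {V. V \<subseteq> E \<and> even (card V)}"
  define e where "e = quad_char (-1::'a)"
  have finE: "finite E" using finI by (simp add: E_def)
  have EI: "E \<subseteq> I" by (auto simp: E_def)
  have evN: "even (CARD('a) - 1)" if "E \<noteq> {}"
    using that even_card_units_if_even_gcd by (auto simp: E_def)
  have "Q * int (card {x\<in>PiE I (\<lambda>_. UNIV - {0}). (\<Sum>j\<in>I. a j * x j ^ m j) = 0})
      = (\<Sum>V\<in>Vs. (\<Prod>j\<in>V. quad_char (a j)) * (Q * convolution I (UNIV - {0}) (\<phi> V) 0))"
    using card_diagonal_zeros_char_sum[OF finI a_nz m_pos cop, of "UNIV - {0}"]
    by (simp add: sum_distrib_left Vs_def \<phi>_def E_def mult_ac)
  also have "\<dots> = (\<Sum>V\<in>Vs. (\<Prod>j\<in>V. quad_char (a j)) * conv_formula (card V) (n - card V) (0::'a))"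
  proof (rule sum.cong[OF refl])
    fix V assume "V \<in> Vs"
    then have "V \<subseteq> I" "V = {} \<or> even (CARD('a) - 1)" using EI evN by (auto simp: Vs_def)
    then show "(\<Prod>j\<in>V. quad_char (a j)) * (Q * convolution I (UNIV - {0}) (\<phi> V) 0)
        = (\<Prod>j\<in>V. quad_char (a j)) * conv_formula (card V) (n - card V) (0::'a)"
      using convolution_nonzero_subset[OF finI] by (simp add: Q_def \<phi>_def n_def)
  qed
  also have "\<dots> = conv_formula 0 n (0::'a)
      + (\<Sum>V\<in>Vs - {{}}. (\<Prod>j\<in>V. quad_char (a j)) * conv_formula (card V) (n - card V) (0::'a))"
    using finE by (subst sum.remove[of _ "{}"]) (simp_all add: Vs_def)
  also have "(\<Sum>V\<in>Vs - {{}}. (\<Prod>j\<in>V. quad_char (a j)) * conv_formula (card V) (n - card V) (0::'a))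
      = (-1) ^ n * (Q - 1) * (\<Sum>V\<in>Vs - {{}}. (\<Prod>j\<in>V. quad_char (a j)) * e ^ (card V div 2) * Q ^ (card V div 2))"
    unfolding sum_distrib_left
  proof (rule sum.cong[OF refl])
    fix V assume V: "V \<in> Vs - {{}}"
    then have VE: "V \<subseteq> E" "even (card V)" "V \<noteq> {}" by (auto simp: Vs_def)
    have cpos: "card V > 0" using VE finE finite_subset by (fastforce simp: card_gt_0_iff)
    have "card V \<le> n" using VE EI finI by (metis card_mono n_def order_trans)
    then have sgn: "(-1::int) ^ (n - card V) = (-1) ^ n"
      using VE(2) by (metis le_add_diff_inverse2 power_add neg_one_even_power mult_1_right)
    show "(\<Prod>j\<in>V. quad_char (a j)) * conv_formula (card V) (n - card V) (0::'a)
        = (-1) ^ n * (Q - 1) * ((\<Prod>j\<in>V. quad_char (a j)) * e ^ (card V div 2) * Q ^ (card V div 2))"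
      using conv_formula_even[OF cpos VE(2), of "n - card V"] sgn by (simp add: Q_def e_def mult_ac)
  qed
  also have "(\<Sum>V\<in>Vs - {{}}. (\<Prod>j\<in>V. quad_char (a j)) * e ^ (card V div 2) * Q ^ (card V div 2))
      = (\<Sum>j=1..card E div 2. quad_char ((-1::'a) ^ j) * esym E (\<lambda>i. quad_char (a i)) (2 * j) * Q ^ j)"
    unfolding Vs_def e_def Q_def by (rule sum_even_subsets_by_size[OF finE evN])
  finally show ?thesis using conv_formula_0[of n] by (simp add: Q_def)
qed

lemma card_diagonal_zeros:
  fixes a :: "nat \<Rightarrow> 'a" and m :: "nat \<Rightarrow> nat"
  assumes finI: "finite I" and I_ne: "I \<noteq> {}" and a_nz: "\<forall>j\<in>I. a j \<noteq> 0" and m_pos: "\<forall>j\<in>I. 0 < m j"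
    and cop: "\<forall>i\<in>I. \<forall>j\<in>I. i \<noteq> j \<longrightarrow>
      coprime (halve_even (gcd (m i) (CARD('a) - 1))) (halve_even (gcd (m j) (CARD('a) - 1)))"
  defines "E \<equiv> {j\<in>I. even (gcd (m j) (CARD('a) - 1))}" and "n \<equiv> card I" and "Q \<equiv> int CARD('a)"
  shows "int (card {x\<in>PiE I (\<lambda>_. UNIV). (\<Sum>j\<in>I. a j * x j ^ m j) = 0})
       = Q ^ (n - 1) + (if E = I \<and> even n
           then quad_char ((-1::'a) ^ (n div 2) * (\<Prod>j\<in>I. a j)) * Q ^ ((n - 2) div 2) * (Q - 1) else 0)"
proof -
  define \<phi> where "\<phi> V = (\<lambda>j::nat. if j \<in> V then quad_char else (\<lambda>_::'a. 1::int))" for V :: "nat set"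
  define Vs where "Vs = {V. V \<subseteq> E \<and> even (card V)}"
  define c where "c V = (\<Prod>j\<in>V. quad_char (a j)) * convolution I UNIV (\<phi> V) 0" for V
  have finE: "finite E" using finI by (simp add: E_def)
  have EI: "E \<subseteq> I" by (auto simp: E_def)
  have evN: "even (CARD('a) - 1)" if "E \<noteq> {}"
    using that even_card_units_if_even_gcd by (auto simp: E_def)
  have c_vanishes: "c V = 0" if "V \<in> Vs - {{}, I}" for V
    using that EI evN convolution_UNIV_vanishes[OF finI] by (auto simp: c_def \<phi>_def Vs_def)
  have "int (card {x\<in>PiE I (\<lambda>_. UNIV). (\<Sum>j\<in>I. a j * x j ^ m j) = 0}) = (\<Sum>V\<in>Vs. c V)"
    using card_diagonal_zeros_char_sum[OF finI a_nz m_pos cop, of UNIV]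
    by (simp add: Vs_def \<phi>_def E_def c_def)
  also have "\<dots> = c {} + (if I \<in> Vs then c I else 0)"
  proof -
    have "(\<Sum>V\<in>Vs. c V) = (\<Sum>V\<in>Vs \<inter> {{}, I}. c V)"
      using finE c_vanishes by (intro sum.mono_neutral_right) (auto simp: Vs_def)
    moreover have "Vs \<inter> {{}, I} = insert {} (if I \<in> Vs then {I} else {})" "{} \<in> Vs"
      using I_ne by (auto simp: Vs_def)
    ultimately show ?thesis using I_ne by auto
  qed
  also have "c {} = Q ^ (n - 1)"
    using convolution_UNIV_trivial[OF finI I_ne] by (simp add: c_def \<phi>_def Q_def n_def)
  also have "(if I \<in> Vs then c I else 0) = (if E = I \<and> even n
      then quad_char ((-1::'a) ^ (n div 2) * (\<Prod>j\<in>I. a j)) * Q ^ ((n - 2) div 2) * (Q - 1) else 0)"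
  proof (cases "E = I \<and> even n")
    case True
    then have IVs: "I \<in> Vs" by (simp add: Vs_def n_def)
    have ev: "even (CARD('a) - 1)" using evN True I_ne by simp
    have "n > 0" using finI I_ne by (simp add: n_def card_gt_0_iff)
    with True have n2: "n \<ge> 2" by (auto elim!: evenE)
    have "convolution I UNIV (\<phi> I) 0 = convolution I (UNIV - {0}) (\<phi> I) 0"
      by (rule convolution_UNIV_nonzero[OF finI]) (simp add: \<phi>_def)
    then have "Q * convolution I UNIV (\<phi> I) 0 = Q * convolution I (UNIV - {0}) (\<phi> I) 0"
      by simp
    also have "\<dots> = conv_formula n 0 (0::'a)"
      using convolution_nonzero_subset[OF finI order_refl] ev by (simp add: Q_def \<phi>_def n_def)
    also have "\<dots> = Q * (quad_char (-1::'a) ^ (n div 2) * Q ^ ((n - 2) div 2) * (Q - 1))"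
    proof -
      have "n div 2 = Suc ((n - 2) div 2)" using n2 True by (auto elim!: evenE)
      then show ?thesis using conv_formula_even[of n 0] n2 True by (simp add: Q_def)
    qed
    finally have "convolution I UNIV (\<phi> I) 0 = quad_char (-1::'a) ^ (n div 2) * Q ^ ((n - 2) div 2) * (Q - 1)"
      using card_ge_2[where 'a='a] by (simp add: Q_def)
    moreover have "quad_char ((-1::'a) ^ (n div 2) * (\<Prod>j\<in>I. a j))
        = quad_char (-1::'a) ^ (n div 2) * (\<Prod>j\<in>I. quad_char (a j))"
      using quad_char_mult[OF ev] quad_char_power[OF ev] quad_char_prod[OF ev finI] by simp
    ultimately show ?thesis using True IVs by (simp add: c_def mult_ac)
  next
    case False
    then have "I \<notin> Vs" using EI by (auto simp: Vs_def n_def)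
    then show ?thesis unfolding if_not_P[OF False] by simp
  qed
  finally show ?thesis .
qed

end

section \<open>Reduction to zeros of the form\<close>

lemma card_double_counting:
  assumes "finite L" "finite X"
    and "\<forall>x\<in>X. card {l\<in>L. R l x} = 1" and "\<forall>l\<in>L. card {x\<in>X. R l x} = c"
  shows "card X = card L * c"
proof -
  have "card X = (\<Sum>x\<in>X. \<Sum>l\<in>L. if R l x then 1 else 0)"
    using assms by (simp add: sum.inter_filter[symmetric])
  also have "\<dots> = (\<Sum>l\<in>L. \<Sum>x\<in>X. if R l x then 1 else 0)" by (rule sum.swap)
  also have "\<dots> = card L * c"
    using assms by (simp add: sum.inter_filter[symmetric])
  finally show ?thesis .
qed

lemma sum_scaled_powers:
  fixes a x :: "'b \<Rightarrow> 'c::comm_semiring_1"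
  assumes "\<forall>j\<in>I. m j dvd M"
  shows "(\<Sum>j\<in>I. a j * (l ^ (M div m j) * x j) ^ m j) = l ^ M * (\<Sum>j\<in>I. a j * x j ^ m j)"
proof -
  have "(l ^ (M div m j)) ^ m j = l ^ M" if "j \<in> I" for j
    using assms that by (metis power_mult dvd_div_mult_self)
  then show ?thesis
    by (simp add: sum_distrib_left power_mult_distrib mult_ac cong: sum.cong)
qed

lemma prod_scaled_powers:
  fixes x :: "'b \<Rightarrow> 'c::comm_semiring_1"
  shows "(\<Prod>j\<in>I. (l ^ e j * x j) ^ kk j) = l ^ (\<Sum>j\<in>I. kk j * e j) * (\<Prod>j\<in>I. x j ^ kk j)"
  by (simp add: power_mult_distrib prod.distrib power_sum power_mult mult.commute)

lemma card_solutions_split: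
  fixes a :: "nat \<Rightarrow> 'a::{finite,field}" and m kk :: "nat \<Rightarrow> nat" and b :: 'a
  assumes finI: "finite I" and kk_pos: "\<forall>j\<in>I. 0 < kk j" and k: "0 < k" and b: "b \<noteq> 0"
  defines "Z \<equiv> {x\<in>PiE I (\<lambda>_. UNIV). (\<Sum>j\<in>I. a j * x j ^ m j) = 0}"
    and "Zs \<equiv> {x\<in>PiE I (\<lambda>_. UNIV - {0}). (\<Sum>j\<in>I. a j * x j ^ m j) = 0}"
    and "X \<equiv> {x\<in>PiE I (\<lambda>_. UNIV - {0}). (\<Sum>j\<in>I. a j * x j ^ m j) \<noteq> 0}"
  shows "int (card {x\<in>PiE I (\<lambda>_. UNIV). (\<Sum>j\<in>I. a j * x j ^ m j) ^ k = b * (\<Prod>j\<in>I. x j ^ kk j)})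
         = int (card Z) - int (card Zs) + int (card {x\<in>X. (\<Sum>j\<in>I. a j * x j ^ m j) ^ k = b * (\<Prod>j\<in>I. x j ^ kk j)})"
    and "int (card X) = int (CARD('a) - 1) ^ card I - int (card Zs)"
proof -
  define s where "s x = (\<Sum>j\<in>I. a j * x j ^ m j)" for x :: "nat \<Rightarrow> 'a"
  define P where "P x = (\<Prod>j\<in>I. x j ^ kk j)" for x :: "nat \<Rightarrow> 'a"
  define T where "T = {x\<in>PiE I (\<lambda>_. UNIV). s x ^ k = b * P x}"
  define T0 where "T0 = {x\<in>PiE I (\<lambda>_. UNIV). s x = 0 \<and> (\<exists>j\<in>I. x j = 0)}"
  define Y where "Y = {x\<in>X. s x ^ k = b * P x}"
  have fin: "finite (PiE I (\<lambda>_. UNIV::'a set))" "finite (PiE I (\<lambda>_. UNIV - {0::'a}))"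
    using finI by (auto simp: finite_PiE)
  have GGsub: "PiE I (\<lambda>_. UNIV - {0::'a}) \<subseteq> PiE I (\<lambda>_. UNIV)" by (auto simp: PiE_def Pi_def)
  have P0: "P x = 0 \<longleftrightarrow> (\<exists>j\<in>I. x j = 0)" for x
    using finI kk_pos by (auto simp: P_def)
  have T: "T = T0 \<union> Y"
  proof (intro equalityI subsetI)
    fix x assume x: "x \<in> T"
    show "x \<in> T0 \<union> Y"
    proof (cases "\<exists>j\<in>I. x j = 0")
      case True
      then have "s x ^ k = 0" using x P0 by (auto simp: T_def)
      then have "s x = 0" by simp
      then show ?thesis using True x by (auto simp: T_def T0_def)
    next
      case False
      then have "P x \<noteq> 0" using P0 by simp
      then have "s x \<noteq> 0" using x b k by (auto simp: T_def zero_power)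
      moreover have "x \<in> PiE I (\<lambda>_. UNIV - {0})" using x False by (auto simp: T_def PiE_def Pi_def)
      ultimately show ?thesis using x by (auto simp: Y_def X_def T_def s_def)
    qed
  next
    fix x assume "x \<in> T0 \<union> Y"
    then show "x \<in> T"
    proof
      assume x: "x \<in> T0"
      then have "P x = 0" "s x = 0" using P0 by (auto simp: T0_def)
      then show ?thesis using x k by (auto simp: T_def T0_def zero_power)
    next
      assume "x \<in> Y" then show ?thesis using GGsub by (auto simp: Y_def X_def T_def s_def)
    qed
  qed
  have dis1: "T0 \<inter> Y = {}" by (auto simp: T0_def Y_def X_def PiE_def Pi_def)
  have cT: "card T = card T0 + card Y"
    unfolding T using fin dis1 by (intro card_Un_disjoint) (auto simp: T0_def Y_def X_def intro: finite_subset)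
  have Z: "Z = T0 \<union> Zs"
    using GGsub by (auto simp: Z_def T0_def Zs_def s_def PiE_def Pi_def)
  have dis2: "T0 \<inter> Zs = {}" by (auto simp: T0_def Zs_def PiE_def Pi_def)
  have cZ: "card Z = card T0 + card Zs"
    unfolding Z using fin dis2 by (intro card_Un_disjoint) (auto simp: T0_def Zs_def intro: finite_subset)
  show "int (card {x\<in>PiE I (\<lambda>_. UNIV). (\<Sum>j\<in>I. a j * x j ^ m j) ^ k = b * (\<Prod>j\<in>I. x j ^ kk j)})
         = int (card Z) - int (card Zs) + int (card {x\<in>X. (\<Sum>j\<in>I. a j * x j ^ m j) ^ k = b * (\<Prod>j\<in>I. x j ^ kk j)})"
    using cT cZ by (simp add: T_def Y_def s_def P_def)
  have G: "PiE I (\<lambda>_. UNIV - {0::'a}) = X \<union> Zs" by (auto simp: X_def Zs_def)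
  have dis3: "X \<inter> Zs = {}" by (auto simp: X_def Zs_def)
  have "card (PiE I (\<lambda>_. UNIV - {0::'a})) = card X + card Zs"
    unfolding G using fin dis3 by (intro card_Un_disjoint) (auto simp: X_def Zs_def intro: finite_subset)
  moreover have "card (PiE I (\<lambda>_. UNIV - {0::'a})) = (CARD('a) - 1) ^ card I"
    using finI by (simp add: card_PiE card_Diff_singleton)
  ultimately show "int (card X) = int (CARD('a) - 1) ^ card I - int (card Zs)"
    by (metis add_diff_cancel_right' of_nat_add of_nat_power)
qed

context field_generator
begin

lemma card_torus_eq:
  fixes a :: "nat \<Rightarrow> 'a" and m kk :: "nat \<Rightarrow> nat" and k M :: nat and b :: 'a
  assumes finI: "finite I" and mdvd: "\<forall>j\<in>I. m j dvd M" and b: "b \<noteq> 0"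
    and cop: "gcd ((\<Sum>j\<in>I. int (kk j * M div m j)) - int (k * M)) (int (CARD('a)) - 1) = 1"
  defines "X \<equiv> {x\<in>PiE I (\<lambda>_. UNIV - {0::'a}). (\<Sum>j\<in>I. a j * x j ^ m j) \<noteq> 0}"
  shows "card X = (CARD('a) - 1) * card {x\<in>X. (\<Sum>j\<in>I. a j * x j ^ m j) ^ k = b * (\<Prod>j\<in>I. x j ^ kk j)}"
proof -
  define s where "s x = (\<Sum>j\<in>I. a j * x j ^ m j)" for x :: "nat \<Rightarrow> 'a"
  define P where "P x = (\<Prod>j\<in>I. x j ^ kk j)" for x :: "nat \<Rightarrow> 'a"
  define act where "act l x = restrict (\<lambda>j. l ^ (M div m j) * x j) I" for l :: 'a and x :: "nat \<Rightarrow> 'a"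
  define A where "A = (\<Sum>j\<in>I. kk j * (M div m j))"
  define B where "B = k * M"
  define Y where "Y = {x\<in>X. s x ^ k = b * P x}"
  define GG where "GG = UNIV - {0::'a}"
  have f1: "s (act l x) = l ^ M * s x" for l x
    using sum_scaled_powers[OF mdvd, of a l x] by (simp add: s_def act_def)
  have f2: "P (act l x) = l ^ A * P x" for l x
    using prod_scaled_powers[of l "\<lambda>j. M div m j" x kk I] by (simp add: P_def act_def A_def)
  have f3: "act l x \<in> X" if "l \<noteq> 0" "x \<in> X" for l x
    using that f1[of l x] by (auto simp: X_def act_def s_def[symmetric] PiE_def Pi_def extensional_def)
  have f4: "act (inverse l) (act l x) = x" if "l \<noteq> 0" "x \<in> X" for l x
  proof
    fix j show "act (inverse l) (act l x) j = x j"
      using that by (cases "j \<in> I") (auto simp: act_def X_def PiE_def extensional_def power_inverse field_simps)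
  qed
  have Pnz: "P x \<noteq> 0" if "x \<in> X" for x
    using that finI by (auto simp: P_def X_def PiE_def Pi_def)
  have snz: "s x \<noteq> 0" if "x \<in> X" for x using that by (simp add: X_def s_def)
  have A_int: "int A = (\<Sum>j\<in>I. int (kk j * M div m j))"
    unfolding A_def of_nat_sum using mdvd by (intro sum.cong refl) (simp add: div_mult_swap)
  have one: "card {l\<in>GG. act l x \<in> Y} = 1" if x: "x \<in> X" for x
  proof -
    have "{l\<in>GG. act l x \<in> Y} = {l\<in>GG. l ^ B * s x ^ k = l ^ A * (b * P x)}"
    proof (intro Collect_cong conj_cong refl)
      fix l assume "l \<in> GG"
      then have l: "l \<noteq> 0" by (simp add: GG_def)
      have "act l x \<in> Y \<longleftrightarrow> s (act l x) ^ k = b * P (act l x)" using f3[OF l x] by (simp add: Y_def)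
      also have "\<dots> \<longleftrightarrow> l ^ B * s x ^ k = l ^ A * (b * P x)"
        by (simp add: f1 f2 B_def power_mult_distrib power_mult mult.commute mult.left_commute)
      finally show "act l x \<in> Y \<longleftrightarrow> l ^ B * s x ^ k = l ^ A * (b * P x)" .
    qed
    also have "card \<dots> = 1" unfolding GG_def
    proof (rule card_unique_unit_solution)
      show "s x ^ k \<noteq> 0" using snz[OF x] by simp
      show "b * P x \<noteq> 0" using b Pnz[OF x] by simp
      show "gcd (int A - int B) (int (CARD('a) - 1)) = 1"
        using cop A_int card_ge_2[where 'a='a] by (simp add: B_def of_nat_diff)
    qed
    finally show ?thesis .
  qed
  have each: "card {x\<in>X. act l x \<in> Y} = card Y" if l: "l \<in> GG" for l
  proof -
    have l0: "l \<noteq> 0" using l by (simp add: GG_def)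
    have "bij_betw (act l) {x\<in>X. act l x \<in> Y} Y"
    proof (rule bij_betwI[of _ _ _ "act (inverse l)"])
      show "act l \<in> {x\<in>X. act l x \<in> Y} \<rightarrow> Y" by auto
      show "act (inverse l) \<in> Y \<rightarrow> {x\<in>X. act l x \<in> Y}"
      proof
        fix y assume y: "y \<in> Y"
        then have yX: "y \<in> X" by (simp add: Y_def)
        have "act l (act (inverse l) y) = y" using f4[of "inverse l" y] l0 yX by simp
        then show "act (inverse l) y \<in> {x\<in>X. act l x \<in> Y}" using f3[of "inverse l" y] l0 yX y by simp
      qed
      show "act (inverse l) (act l x) = x" if "x \<in> {x\<in>X. act l x \<in> Y}" for x
        using f4 l0 that by simp
      show "act l (act (inverse l) y) = y" if "y \<in> Y" for y
        using f4[of "inverse l" y] l0 that by (simp add: Y_def)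
    qed
    then show ?thesis by (rule bij_betw_same_card)
  qed
  have finX: "finite X" unfolding X_def
    by (rule finite_subset[of _ "PiE I (\<lambda>_. UNIV - {0::'a})"]) (auto simp: finite_PiE finI)
  have "card X = card GG * card Y"
    by (rule card_double_counting[where R = "\<lambda>l x. act l x \<in> Y"]) (simp_all add: finX one each)
  then have "card X = (CARD('a) - 1) * card Y" by (simp add: GG_def card_nonzero)
  then show ?thesis by (simp add: Y_def s_def P_def)
qed

lemma card_solutions_eq_zero_counts:
  fixes a :: "nat \<Rightarrow> 'a" and m kk :: "nat \<Rightarrow> nat" and b :: 'a
  assumes finI: "finite I" and kk_pos: "\<forall>j\<in>I. 0 < kk j" and k: "0 < k" and b: "b \<noteq> 0"
    and m_dvd: "\<forall>j\<in>I. m j dvd M"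
    and cop: "gcd ((\<Sum>j\<in>I. int (kk j * M div m j)) - int (k * M)) (int CARD('a) - 1) = 1"
  defines "Q \<equiv> int CARD('a)"
  shows "(Q - 1) * int (card {x\<in>PiE I (\<lambda>_. UNIV). (\<Sum>j\<in>I. a j * x j ^ m j) ^ k = b * (\<Prod>j\<in>I. x j ^ kk j)})
       = (Q - 1) * int (card {x\<in>PiE I (\<lambda>_. UNIV). (\<Sum>j\<in>I. a j * x j ^ m j) = 0})
         + (Q - 1) ^ card I - Q * int (card {x\<in>PiE I (\<lambda>_. UNIV - {0}). (\<Sum>j\<in>I. a j * x j ^ m j) = 0})"
proof -
  define s where "s x = (\<Sum>j\<in>I. a j * x j ^ m j)" for x :: "nat \<Rightarrow> 'a"
  define P where "P x = (\<Prod>j\<in>I. x j ^ kk j)" for x :: "nat \<Rightarrow> 'a"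
  define X where "X = {x\<in>PiE I (\<lambda>_. UNIV - {0::'a}). s x \<noteq> 0}"
  define cY where "cY = int (card {x\<in>X. s x ^ k = b * P x})"
  define cZ where "cZ = int (card {x\<in>PiE I (\<lambda>_. UNIV). s x = 0})"
  define cZs where "cZs = int (card {x\<in>PiE I (\<lambda>_. UNIV - {0}). s x = 0})"
  have Q: "int (CARD('a) - 1) = Q - 1" using card_ge_2[where 'a='a] by (simp add: Q_def of_nat_diff)
  define cT where "cT = int (card {x\<in>PiE I (\<lambda>_. UNIV). s x ^ k = b * P x})"
  have "cT = cZ - cZs + cY" and cX: "int (card X) = (Q - 1) ^ card I - cZs"
    using card_solutions_split[OF finI kk_pos k b, of a m] Q
    by (simp_all add: s_def P_def X_def cT_def cY_def cZ_def cZs_def)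
  moreover have "int (card X) = (Q - 1) * cY"
    using card_torus_eq[OF finI m_dvd b cop, of a] Q by (simp add: X_def cY_def s_def P_def)
  ultimately have cY: "(Q - 1) * cY = (Q - 1) ^ card I - cZs" by simp
  have "(Q - 1) * cT = (Q - 1) * cZ - (Q - 1) * cZs + (Q - 1) * cY"
    unfolding \<open>cT = cZ - cZs + cY\<close> by (simp add: algebra_simps)
  also have "\<dots> = (Q - 1) * cZ + (Q - 1) ^ card I - Q * cZs"
    unfolding cY by (simp add: algebra_simps)
  finally have "(Q - 1) * cT = (Q - 1) * cZ + (Q - 1) ^ card I - Q * cZs" .
  then show ?thesis by (simp add: cT_def cZ_def cZs_def s_def P_def)
qed

end

lemma count_from_zero_counts:
  fixes Q T Z Zs R Ex :: int
  assumes "Q \<noteq> 1" "0 < n"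
    and "(Q - 1) * T = (Q - 1) * Z + (Q - 1) ^ n - Q * Zs"
    and "Z = Q ^ (n - 1) + Ex"
    and "Q * Zs = (Q - 1) ^ n - (-1) ^ n + Q * (-1) ^ n + (-1) ^ n * (Q - 1) * R"
  shows "T = Q ^ (n - 1) + (-1) ^ (n - 1) + (-1) ^ (n - 1) * R + Ex"
proof -
  have "(-1::int) ^ n = - ((-1) ^ (n - 1))" using assms(2) by (cases n) simp_all
  then have "(Q - 1) * T = (Q - 1) * (Q ^ (n - 1) + (-1) ^ (n - 1) + (-1) ^ (n - 1) * R + Ex)"
    using assms(3-5) by (simp add: algebra_simps)
  then show ?thesis using assms(1) by simp
qed

theorem theorem4:
  fixes a :: "nat \<Rightarrow> 'a::{finite,field}" and b :: 'a
    and m kk :: "nat \<Rightarrow> nat" and k n t :: nat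
  defines "q \<equiv> card (UNIV :: 'a set)"
  defines "M \<equiv> Lcm (m ` {1..n})"
  defines "d \<equiv> (\<lambda>j. gcd (m j) (q - 1))"
  assumes n2: "n \<ge> 2"
    and a_nz: "\<forall>j\<in>{1..n}. a j \<noteq> 0"
    and b_nz: "b \<noteq> 0"
    and m_pos: "\<forall>j\<in>{1..n}. m j > 0"
    and kk_pos: "\<forall>j\<in>{1..n}. kk j > 0"
    and k_pos: "k > 0"
    and t_le: "t \<le> n"
    and d_odd: "\<forall>j\<in>{1..t}. odd (d j)"
    and d_even: "\<forall>j\<in>{t+1..n}. even (d j)"
    and d_coprime: "\<forall>i\<in>{1..n}. \<forall>j\<in>{1..n}. i \<noteq> j \<longrightarrow>
        coprime (if i \<le> t then d i else d i div 2) (if j \<le> t then d j else d j div 2)"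
    and gcd_cond: "gcd ((\<Sum>j=1..n. int (kk j * M div m j)) - int (k * M)) (int q - 1) = 1"
  shows "int (card {x \<in> {1..n} \<rightarrow>\<^sub>E (UNIV :: 'a set).
            (\<Sum>j=1..n. a j * x j ^ m j) ^ k = b * (\<Prod>j=1..n. x j ^ kk j)})
       = int q ^ (n - 1) + (-1) ^ (n - 1)
         + (-1) ^ (n - 1) * (\<Sum>j=1..(n - t) div 2.
              quad_char ((-1 :: 'a) ^ j) * esym {t+1..n} (\<lambda>i. quad_char (a i)) (2 * j) * int q ^ j)
         + (if t = 0 \<and> even n
            then quad_char ((-1 :: 'a) ^ (n div 2) * (\<Prod>j=1..n. a j)) * int q ^ ((n - 2) div 2) * (int q - 1)
            else 0)"
proof -
  obtain g :: 'a where "field_generator g" using field_generator_exists by blast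
  then interpret field_generator g .
  have E: "{j\<in>{1..n}. even (gcd (m j) (CARD('a) - 1))} = {t+1..n}"
    using d_odd d_even t_le by (auto simp: d_def q_def)
  have halve: "halve_even (gcd (m j) (CARD('a) - 1)) = (if j \<le> t then d j else d j div 2)" if "j \<in> {1..n}" for j
    using that d_odd d_even by (auto simp: halve_even_def d_def q_def)
  have cop: "\<forall>i\<in>{1..n}. \<forall>j\<in>{1..n}. i \<noteq> j \<longrightarrow>
      coprime (halve_even (gcd (m i) (CARD('a) - 1))) (halve_even (gcd (m j) (CARD('a) - 1)))"
    using d_coprime halve by simp
  have m_dvd: "\<forall>j\<in>{1..n}. m j dvd M" by (simp add: M_def dvd_Lcm)
  have E_eq_I: "{t+1..n} = {1..n} \<longleftrightarrow> t = 0"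
  proof
    assume "{t+1..n} = {1..n}"
    moreover have "1 \<in> {1..n}" using n2 by simp
    ultimately show "t = 0" by (metis atLeastAtMost_iff add_le_same_cancel2 le_zero_eq)
  qed simp
  define Q where "Q = int q"
  define R where "R = (\<Sum>j=1..(n - t) div 2.
    quad_char ((-1 :: 'a) ^ j) * esym {t+1..n} (\<lambda>i. quad_char (a i)) (2 * j) * Q ^ j)"
  define Ex where "Ex = (if t = 0 \<and> even n
    then quad_char ((-1 :: 'a) ^ (n div 2) * (\<Prod>j=1..n. a j)) * Q ^ ((n - 2) div 2) * (Q - 1) else 0)"
  define cT where "cT = int (card {x \<in> {1..n} \<rightarrow>\<^sub>E (UNIV :: 'a set).
    (\<Sum>j=1..n. a j * x j ^ m j) ^ k = b * (\<Prod>j=1..n. x j ^ kk j)})"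
  define cZ where "cZ = int (card {x \<in> {1..n} \<rightarrow>\<^sub>E (UNIV :: 'a set). (\<Sum>j=1..n. a j * x j ^ m j) = 0})"
  define cZs where "cZs = int (card {x \<in> {1..n} \<rightarrow>\<^sub>E (UNIV - {0 :: 'a}). (\<Sum>j=1..n. a j * x j ^ m j) = 0})"
  have "(Q - 1) * cT = (Q - 1) * cZ + (Q - 1) ^ n - Q * cZs"
    using card_solutions_eq_zero_counts[OF _ kk_pos k_pos b_nz m_dvd gcd_cond[unfolded q_def], of a]
    by (simp add: cT_def cZ_def cZs_def Q_def q_def)
  moreover have "cZ = Q ^ (n - 1) + Ex"
    using card_diagonal_zeros[OF _ _ a_nz m_pos cop] n2 unfolding E E_eq_I
    by (simp add: cZ_def Ex_def Q_def q_def)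
  moreover have "Q * cZs = (Q - 1) ^ n - (-1) ^ n + Q * (-1) ^ n + (-1) ^ n * (Q - 1) * R"
    using card_diagonal_zeros_nonzero[OF _ a_nz m_pos cop] unfolding E
    by (simp add: cZs_def R_def Q_def q_def)
  ultimately have "cT = Q ^ (n - 1) + (-1) ^ (n - 1) + (-1) ^ (n - 1) * R + Ex"
    using card_ge_2[where 'a='a] n2 by (intro count_from_zero_counts) (simp_all add: Q_def q_def)
  then show ?thesis by (simp add: cT_def Q_def R_def Ex_def q_def)
qed

end
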